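(* Consider the SGLD algorithm and assumptions of the following context, with $T=nK$ iterations for an integer $K\ge2$, step sizes $\eta_{(t)}=c/t$ for a constant $c>0$, noise levels $\sigma_{(t)}=\sqrt{\eta_{(t)}}$, and "without replacement" sampling: for each epoch $k=1,\dots,K$, the indices $(U_{(t)})_{t=(k-1)n+1}^{kn}$ form a (random) permutation of $\{1,\dots,n\}$, so each training sample is used exactly once per epoch. Then $$|\mathrm{gen}(\mu,P_{W|S})|\le\frac{RL\sqrt c}{n}\sum_{i=1}^n\sqrt{\frac1i+\frac{\log(K-1)+1}{n}}.$$
   Context: SGLD on $\mathcal W=\mathbb R^d$ with loss $\ell(w,z)$ differentiable in $w$: $S=(Z_1,\dots,Z_n)$ i.i.d. from $\mu$, fixed $W_{(0)}$, and $W_{(t)}=W_{(t-1)}-\eta_{(t)}\nabla_w\ell(W_{(t-1)},Z_{U_{(t)}})+\sigma_{(t)}\xi_{(t)}$ for $t=1,\dots,T$, with $\xi_{(t)}$ i.i.d. $\mathcal N(0,I_d)$, the index sequence $U^{(T)}$ random, and $S$, $U^{(T)}$, $(\xi_{(t)})$ mutually independent; output $W=W_{(T)}$. Assumptions: for every $w$, $\ell(w,Z)$ with $Z\sim\mu$ is $R$-sub-Gaussian (i.e. $\log\mathbb E[e^{\lambda(X-\mathbb EX)}]\le R^2\lambda^2/2$ for all real $\lambda$), and $\sup_{w,z}\|\nabla_w\ell(w,z)\|_2\le L$. Generalization error $\mathrm{gen}(\mu,P_{W|S})=\mathbb E[L_\mu(W)-L_S(W)]$ with $L_\mu(w)=\mathbb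 E_{Z\sim\mu}\ell(w,Z)$, $L_S(w)=\frac1n\sum_i\ell(w,Z_i)$. *)

theory Defs
  imports "HOL-Probability.Probability"
begin

definition subgaussian :: "'z measure \<Rightarrow> ('z \<Rightarrow> real) \<Rightarrow> real \<Rightarrow> bool" where
  "subgaussian M X R \<longleftrightarrow> integrable M X \<and>
     (\<forall>l::real. integrable M (\<lambda>z. exp (l * (X z - (\<integral>y. X y \<partial>M)))) \<and>
        ln (\<integral>z. exp (l * (X z - (\<integral>y. X y \<partial>M))) \<partial>M) \<le> R\<^sup>2 * l\<^sup>2 / 2)"

definition std_gauss :: "'a::euclidean_space measure" where
  "std_gauss = density lborel
     (\<lambda>x::'a. ennreal ((2 * pi) powr (- real DIM('a) / 2) * exp (- (norm x)\<^sup>2 / 2)))"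

primrec sgld_traj :: "'a::real_normed_vector \<Rightarrow> (nat \<Rightarrow> real) \<Rightarrow> (nat \<Rightarrow> real) \<Rightarrow>
    ('a \<Rightarrow> 'z \<Rightarrow> 'a) \<Rightarrow> (nat \<Rightarrow> 'z) \<Rightarrow> (nat \<Rightarrow> nat) \<Rightarrow> (nat \<Rightarrow> 'a) \<Rightarrow> nat \<Rightarrow> 'a" where
  "sgld_traj w0 eta sg g s u xi 0 = w0"
| "sgld_traj w0 eta sg g s u xi (Suc t) =
     sgld_traj w0 eta sg g s u xi t
     - eta (Suc t) *\<^sub>R g (sgld_traj w0 eta sg g s u xi t) (s (u (Suc t)))
     + sg (Suc t) *\<^sub>R xi (Suc t)"

definition pop_risk :: "'z measure \<Rightarrow> ('a \<Rightarrow> 'z \<Rightarrow> real) \<Rightarrow> 'a \<Rightarrow> real" where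
  "pop_risk \<mu> loss w = (\<integral>z. loss w z \<partial>\<mu>)"

definition emp_risk :: "('a \<Rightarrow> 'z \<Rightarrow> real) \<Rightarrow> nat \<Rightarrow> (nat \<Rightarrow> 'z) \<Rightarrow> 'a \<Rightarrow> real" where
  "emp_risk loss n s w = (\<Sum>i=1..n. loss w (s i)) / real n"

definition sgld_gen :: "'z measure \<Rightarrow> ('a::euclidean_space \<Rightarrow> 'z \<Rightarrow> real) \<Rightarrow> ('a \<Rightarrow> 'z \<Rightarrow> 'a) \<Rightarrow>
    'a \<Rightarrow> (nat \<Rightarrow> real) \<Rightarrow> (nat \<Rightarrow> real) \<Rightarrow> (nat \<Rightarrow> nat) pmf \<Rightarrow> nat \<Rightarrow> nat \<Rightarrow> real" where
  "sgld_gen \<mu> loss g w0 eta sg PU n T =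
     (\<integral>(s, u, xi). (let W = sgld_traj w0 eta sg g s u xi T in
                      pop_risk \<mu> loss W - emp_risk loss n s W)
       \<partial>(PiM {1..n} (\<lambda>_. \<mu>) \<Otimes>\<^sub>M (measure_pmf PU \<Otimes>\<^sub>M PiM {1..T} (\<lambda>_. std_gauss))))"

end

theory Submission
  imports Defs
begin

text \<open>Fix the index sequence \<open>u\<close> and a sample index \<open>i\<close>, and let \<open>a\<^sub>k = (\<eta>\<^sub>k / \<sigma>\<^sub>k) grad(W\<^sub>k\<^sub>-\<^sub>1, Z\<^sub>i)\<close>
  at the steps \<open>k\<close> that read \<open>Z\<^sub>i\<close>. Reweighting the Gaussian noise by the likelihood ratio
  \<open>exp (\<Sum>\<^sub>k a\<^sub>k \<bullet> \<xi>\<^sub>k - \<parallel>a\<^sub>k\<parallel>\<^sup>2 / 2)\<close> (Girsanov) turns SGLD into a chain that never reads \<open>Z\<^sub>i\<close>,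
  so by sub-Gaussianity \<open>E exp (\<lambda> (loss(W, Z\<^sub>i) - L\<^sub>\<mu>(W)) + log LR) \<le> exp (R\<^sup>2 \<lambda>\<^sup>2 / 2)\<close>.
  By Jensen, and since \<open>E log LR = - \<Sum>\<^sub>k E \<parallel>a\<^sub>k\<parallel>\<^sup>2 / 2\<close>, optimising over \<open>\<lambda>\<close> gives
  \<open>|E (loss(W, Z\<^sub>i) - L\<^sub>\<mu>(W))| \<le> R L (\<Sum>\<^bsub>k: u k = i\<^esub> \<eta>\<^sub>k\<^sup>2 / \<sigma>\<^sub>k\<^sup>2)\<^sup>1\<^sup>/\<^sup>2\<close>; averaging over \<open>i\<close> and then
  over \<open>u\<close> bounds the generalization error. With \<open>\<eta>\<^sub>k\<^sup>2 / \<sigma>\<^sub>k\<^sup>2 = c / k\<close> and sampling without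
  replacement, the sample read at time \<open>j\<close> of the first epoch is read once more in each later epoch
  \<open>k\<close>, at a time \<open>\<ge> k n\<close>, so its weight is at most \<open>c (1 / j + (1 + ln (K - 1)) / n)\<close>.\<close>

lemma integrable_pair_measure_fst:
  fixes f :: "'a \<Rightarrow> real"
  assumes "sigma_finite_measure M1" "prob_space M2" "integrable M1 f"
  shows "integrable (M1 \<Otimes>\<^sub>M M2) (\<lambda>x. f (fst x))"
proof -
  interpret M1: sigma_finite_measure M1 by fact
  interpret M2: prob_space M2 by fact
  interpret pair_sigma_finite M1 M2 ..
  have [measurable]: "f \<in> borel_measurable M1" using assms(3) by auto
  have "(\<integral>\<^sup>+x. ennreal (norm (f (fst x))) \<partial>(M1 \<Otimes>\<^sub>M M2)) = (\<integral>\<^sup>+a. ennreal (norm (f a)) \<partial>M1)"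
    by (subst M2.nn_integral_fst[symmetric]) (auto simp: M2.emeasure_space_1)
  also have "\<dots> < \<infinity>" using assms(3) by (simp add: integrable_iff_bounded)
  finally show ?thesis by (intro integrableI_bounded) auto
qed

lemma integrable_pair_measure_snd:
  fixes f :: "'b \<Rightarrow> real"
  assumes "prob_space M1" "sigma_finite_measure M2" "integrable M2 f"
  shows "integrable (M1 \<Otimes>\<^sub>M M2) (\<lambda>x. f (snd x))"
proof -
  interpret M1: prob_space M1 by fact
  interpret M2: sigma_finite_measure M2 by fact
  interpret pair_sigma_finite M1 M2 ..
  have [measurable]: "f \<in> borel_measurable M2" using assms(3) by auto
  have "(\<integral>\<^sup>+x. ennreal (norm (f (snd x))) \<partial>(M1 \<Otimes>\<^sub>M M2)) = (\<integral>\<^sup>+b. ennreal (norm (f b)) \<partial>M2)"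
    by (subst M2.nn_integral_fst[symmetric]) (auto simp: M1.emeasure_space_1)
  also have "\<dots> < \<infinity>" using assms(3) by (simp add: integrable_iff_bounded)
  finally show ?thesis by (intro integrableI_bounded) auto
qed

lemma integrable_PiM_component:
  fixes f :: "'a \<Rightarrow> real"
  assumes "\<And>j. j \<in> I \<Longrightarrow> prob_space (M j)" "k \<in> I" "integrable (M k) f"
  shows "integrable (PiM I M) (\<lambda>x. f (x k))"
proof -
  have "distr (PiM I M) (M k) (\<lambda>x. x k) = M k"
    by (rule distr_PiM_component) (use assms in auto)
  then show ?thesis
    using assms(2,3) integrable_distr[of "\<lambda>x. x k" "PiM I M" "M k" f]
    by (simp add: measurable_component_singleton)
qed

lemma (in prob_space) integral_le_ln_of_nn_integral_exp_le:
  assumes "integrable M Y" "(\<integral>\<^sup>+x. ennreal (exp (Y x)) \<partial>M) \<le> ennreal B" "B > 0"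
  shows "(\<integral>x. Y x \<partial>M) \<le> ln B"
proof -
  define m where "m = (\<integral>x. Y x \<partial>M)"
  have integrable_exp: "integrable M (\<lambda>x. exp (Y x))"
    using assms by (intro integrableI_nonneg) (auto simp: top_unique less_top[symmetric] intro: le_less_trans)
  have "exp m = (\<integral>x. exp m * (1 + Y x - m) \<partial>M)"
    using assms(1) by (simp add: m_def prob_space)
  also have "\<dots> \<le> (\<integral>x. exp (Y x) \<partial>M)"
  proof (rule integral_mono[OF _ integrable_exp])
    show "integrable M (\<lambda>x. exp m * (1 + Y x - m))" using assms(1) by auto
    show "exp m * (1 + Y x - m) \<le> exp (Y x)" for x
    proof -
      have "exp m * (1 + (Y x - m)) \<le> exp m * exp (Y x - m)"
        by (intro mult_left_mono exp_ge_add_one_self) simp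
      then show ?thesis by (simp add: exp_diff add_diff_eq)
    qed
  qed
  also have "\<dots> \<le> B"
  proof -
    have "ennreal (\<integral>x. exp (Y x) \<partial>M) \<le> ennreal B"
      using integrable_exp assms(2) by (subst nn_integral_eq_integral[symmetric]) auto
    then show ?thesis using assms(3) by (simp add: ennreal_le_iff)
  qed
  finally have "exp m \<le> B" .
  then show ?thesis unfolding m_def[symmetric] using assms(3) by (metis ln_exp ln_le_cancel_iff exp_gt_zero)
qed

lemma abs_le_of_forall_linear_le_quadratic:
  fixes d a b :: real
  assumes "a \<ge> 0" "b \<ge> 0" "\<And>l. l * d \<le> l\<^sup>2 * a + b"
  shows "\<bar>d\<bar> \<le> 2 * sqrt (a * b)"
proof (cases "a = 0")
  case True
  have "d = 0"
  proof (rule ccontr)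
    assume "d \<noteq> 0"
    then show False using assms(3)[of "(b + 1) / d"] True by simp
  qed
  then show ?thesis using assms(1,2) by simp
next
  case False
  then have "a > 0" using assms(1) by simp
  have "d / (2 * a) * d \<le> (d / (2 * a))\<^sup>2 * a + b" by (rule assms(3))
  then have "d\<^sup>2 \<le> 4 * a * b"
    using \<open>a > 0\<close> by (simp add: field_simps power2_eq_square)
  then have "sqrt (d\<^sup>2) \<le> sqrt (4 * (a * b))" by (intro real_sqrt_le_mono) (simp add: mult.assoc)
  then show ?thesis by (simp add: real_sqrt_mult)
qed

lemma abs_integral_mixture_le:
  fixes F :: "'u \<Rightarrow> 's \<times> 'x \<Rightarrow> real"
  assumes S: "prob_space S" and X: "prob_space X" and "B \<ge> 0"
    and integrable: "\<And>u. u \<in> set_pmf P \<Longrightarrow> integrable (S \<Otimes>\<^sub>M X) (F u)"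
    and bound: "\<And>u. u \<in> set_pmf P \<Longrightarrow> \<bar>\<integral>p. F u p \<partial>(S \<Otimes>\<^sub>M X)\<bar> \<le> B"
  shows "\<bar>\<integral>(s, u, x). F u (s, x) \<partial>(S \<Otimes>\<^sub>M (measure_pmf P \<Otimes>\<^sub>M X))\<bar> \<le> B"
proof (cases "integrable (S \<Otimes>\<^sub>M (measure_pmf P \<Otimes>\<^sub>M X)) (\<lambda>(s, u, x). F u (s, x))")
  case True
  interpret S: prob_space S by fact
  interpret X: prob_space X by fact
  interpret PX: pair_prob_space "measure_pmf P" X ..
  interpret SX: pair_prob_space S X ..
  interpret SPX: pair_prob_space S "measure_pmf P \<Otimes>\<^sub>M X" ..
  have "(\<integral>(s, u, x). F u (s, x) \<partial>(S \<Otimes>\<^sub>M (measure_pmf P \<Otimes>\<^sub>M X)))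
      = (\<integral>(u, x). (\<integral>s. F u (s, x) \<partial>S) \<partial>(measure_pmf P \<Otimes>\<^sub>M X))"
    using SPX.integral_snd[OF True] by (simp add: case_prod_beta')
  also have "\<dots> = (\<integral>u. (\<integral>x. (\<integral>s. F u (s, x) \<partial>S) \<partial>X) \<partial>P)"
    using PX.integral_fst'[OF SPX.integrable_snd[OF True]] by (simp add: case_prod_beta')
  finally have iterated: "(\<integral>(s, u, x). F u (s, x) \<partial>(S \<Otimes>\<^sub>M (measure_pmf P \<Otimes>\<^sub>M X)))
      = (\<integral>u. (\<integral>x. (\<integral>s. F u (s, x) \<partial>S) \<partial>X) \<partial>P)" .
  have "AE u in measure_pmf P. \<bar>\<integral>x. (\<integral>s. F u (s, x) \<partial>S) \<partial>X\<bar> \<le> B"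
  proof (unfold AE_measure_pmf_iff, intro ballI)
    fix u assume "u \<in> set_pmf P"
    then show "\<bar>\<integral>x. (\<integral>s. F u (s, x) \<partial>S) \<partial>X\<bar> \<le> B"
      using SX.integral_snd[of "\<lambda>s x. F u (s, x)"] integrable bound by simp
  qed
  then have "\<bar>\<integral>u. (\<integral>x. (\<integral>s. F u (s, x) \<partial>S) \<partial>X) \<partial>P\<bar> \<le> (\<integral>u. B \<partial>P)"
    using \<open>B \<ge> 0\<close> by (intro order_trans[OF integral_abs_bound] integral_mono_AE') auto
  then show ?thesis
    unfolding iterated by (simp add: measure_pmf.prob_space)
qed (use \<open>B \<ge> 0\<close> in \<open>simp add: not_integrable_integral_eq\<close>)

section \<open>The standard Gaussian measure\<close>

definition gauss_density :: "'a::euclidean_space \<Rightarrow> real" where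
  "gauss_density x = (2 * pi) powr (- real DIM('a) / 2) * exp (- (norm x)\<^sup>2 / 2)"

lemma gauss_density_pos: "gauss_density x > 0"
  by (simp add: gauss_density_def)

lemma borel_measurable_gauss_density[measurable]: "gauss_density \<in> borel_measurable borel"
  unfolding gauss_density_def by measurable

lemma std_gauss_eq_density: "std_gauss = density lborel (\<lambda>x. ennreal (gauss_density x))"
  unfolding std_gauss_def gauss_density_def ..

lemma sets_std_gauss[simp, measurable_cong]: "sets std_gauss = sets borel"
  by (simp add: std_gauss_def)

lemma space_std_gauss[simp]: "space std_gauss = UNIV"
  by (simp add: std_gauss_def)

lemma gauss_density_euclidean_sum:
  fixes p :: "'a::euclidean_space \<Rightarrow> real"
  shows "gauss_density (\<Sum>b\<in>Basis. p b *\<^sub>R b :: 'a) = (\<Prod>b\<in>(Basis::'a set). std_normal_density (p b))"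
proof -
  let ?x = "(\<Sum>b\<in>Basis. p b *\<^sub>R b :: 'a)"
  have ib: "?x \<bullet> b = p b" if "b \<in> Basis" for b
    using that by (simp add: inner_sum_left inner_Basis if_distrib cong: if_cong)
  have "(norm ?x)\<^sup>2 = ?x \<bullet> ?x" by (simp add: power2_norm_eq_inner)
  also have "\<dots> = (\<Sum>b\<in>Basis. (?x \<bullet> b) * (?x \<bullet> b))" by (rule euclidean_inner)
  also have "\<dots> = (\<Sum>b\<in>Basis. (?x \<bullet> b)\<^sup>2)" by (simp add: power2_eq_square)
  also have "\<dots> = (\<Sum>b\<in>(Basis::'a set). (p b)\<^sup>2)" using ib by simp
  finally have n: "(norm ?x)\<^sup>2 = (\<Sum>b\<in>(Basis::'a set). (p b)\<^sup>2)" .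
  have c: "(2 * pi) powr (- real DIM('a) / 2) = (1 / sqrt (2 * pi)) ^ DIM('a)"
  proof -
    have "(2 * pi) powr (- real DIM('a) / 2) = inverse (((2 * pi) powr (1/2)) powr real DIM('a))"
      by (simp add: powr_powr powr_minus[symmetric])
    also have "\<dots> = (1 / sqrt (2 * pi)) ^ DIM('a)"
    proof -
      have "((2 * pi) powr (1/2)) powr real DIM('a) = sqrt (2 * pi) ^ DIM('a)"
        by (subst powr_half_sqrt) (auto intro: powr_realpow)
      then show ?thesis by (simp add: power_one_over inverse_eq_divide)
    qed
    finally show ?thesis .
  qed
  have e: "exp (- (\<Sum>b\<in>(Basis::'a set). (p b)\<^sup>2) / 2) = (\<Prod>b\<in>(Basis::'a set). exp (- (p b)\<^sup>2 / 2))"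
    by (simp add: exp_sum[symmetric] sum_divide_distrib sum_negf)
  show ?thesis
    unfolding gauss_density_def n c e std_normal_density_def prod.distrib by simp
qed

lemma nn_integral_gauss_density: "(\<integral>\<^sup>+x. ennreal (gauss_density (x::'a::euclidean_space)) \<partial>lborel) = 1"
proof -
  interpret product_sigma_finite "\<lambda>_::'a. lborel :: real measure" by standard
  have "(\<integral>\<^sup>+x. ennreal (gauss_density (x::'a)) \<partial>lborel)
      = (\<integral>\<^sup>+p. ennreal (gauss_density (\<Sum>b\<in>Basis. p b *\<^sub>R b :: 'a)) \<partial>(\<Pi>\<^sub>M b\<in>(Basis::'a set). lborel))"
    by (subst lborel_eq) (simp add: nn_integral_distr)
  also have "\<dots> = (\<integral>\<^sup>+p. (\<Prod>b\<in>(Basis::'a set). ennreal (std_normal_density (p b))) \<partial>(\<Pi>\<^sub>M b\<in>(Basis::'a set). lborel))"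
    by (simp add: gauss_density_euclidean_sum prod_ennreal)
  also have "\<dots> = (\<Prod>b\<in>(Basis::'a set). (\<integral>\<^sup>+t. ennreal (std_normal_density t) \<partial>lborel))"
    by (rule product_nn_integral_prod) auto
  also have "(\<integral>\<^sup>+t. ennreal (std_normal_density t) \<partial>lborel) = 1"
    by (subst nn_integral_eq_integral) (auto simp: std_normal_density_def)
  finally show ?thesis by simp
qed

lemma prob_space_std_gauss: "prob_space (std_gauss :: 'a::euclidean_space measure)"
  by (rule prob_spaceI)
    (simp add: std_gauss_eq_density emeasure_density_const nn_integral_gauss_density emeasure_density)

lemma prob_space_PiM_std_gauss: "prob_space (PiM I (\<lambda>_. std_gauss :: 'a::euclidean_space measure))"
  by (rule prob_space_PiM) (rule prob_space_std_gauss)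

lemma product_sigma_finite_std_gauss:
  "product_sigma_finite (\<lambda>_::'i. std_gauss :: 'a::euclidean_space measure)"
  unfolding product_sigma_finite_def using prob_space_std_gauss prob_space_imp_sigma_finite by blast

lemma gauss_density_shift: "gauss_density x * exp (a \<bullet> x - (norm a)\<^sup>2 / 2) = gauss_density (x - a)"
proof -
  have "(norm (x - a))\<^sup>2 = (norm x)\<^sup>2 - 2 * (a \<bullet> x) + (norm a)\<^sup>2"
    by (simp add: power2_norm_eq_inner inner_diff inner_commute algebra_simps)
  then show ?thesis
    by (simp add: gauss_density_def mult.assoc exp_add[symmetric] field_simps)
qed

lemma nn_integral_std_gauss_shift:
  fixes a :: "'a::euclidean_space" and f :: "'a \<Rightarrow> ennreal"
  assumes f[measurable]: "f \<in> borel_measurable borel"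
  shows "(\<integral>\<^sup>+x. f x * ennreal (exp (a \<bullet> x - (norm a)\<^sup>2 / 2)) \<partial>std_gauss) = (\<integral>\<^sup>+x. f (x + a) \<partial>std_gauss)"
proof -
  have "(\<integral>\<^sup>+x. f x * ennreal (exp (a \<bullet> x - (norm a)\<^sup>2 / 2)) \<partial>std_gauss)
      = (\<integral>\<^sup>+x. f x * ennreal (gauss_density (x - a)) \<partial>lborel)"
    unfolding std_gauss_eq_density
    by (subst nn_integral_density)
       (auto intro!: nn_integral_cong simp: gauss_density_shift[symmetric] ennreal_mult'' gauss_density_pos less_imp_le mult_ac)
  also have "\<dots> = (\<integral>\<^sup>+x. f x * ennreal (gauss_density (x - a)) \<partial>distr lborel borel ((+) a))"
    by (simp add: lborel_distr_plus)
  also have "\<dots> = (\<integral>\<^sup>+y. f (a + y) * ennreal (gauss_density y) \<partial>lborel)"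
    by (subst nn_integral_distr) auto
  also have "\<dots> = (\<integral>\<^sup>+x. f (x + a) \<partial>std_gauss)"
    unfolding std_gauss_eq_density
    by (subst nn_integral_density) (auto intro!: nn_integral_cong simp: mult_ac add_ac)
  finally show ?thesis .
qed

lemma lborel_distr_uminus_euclidean: "distr lborel borel uminus = (lborel :: 'a::euclidean_space measure)"
  by (subst lborel_affine[of "-1" 0]) (auto simp: density_1 one_ennreal_def[symmetric])

lemma nn_integral_std_gauss_uminus:
  fixes f :: "'a::euclidean_space \<Rightarrow> ennreal"
  assumes f[measurable]: "f \<in> borel_measurable borel"
  shows "(\<integral>\<^sup>+x. f (- x) \<partial>std_gauss) = (\<integral>\<^sup>+x. f x \<partial>std_gauss)"
proof -
  have "(\<integral>\<^sup>+x. f x \<partial>std_gauss) = (\<integral>\<^sup>+x. ennreal (gauss_density x) * f x \<partial>distr lborel borel uminus)"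
    unfolding std_gauss_eq_density by (simp add: nn_integral_density lborel_distr_uminus_euclidean)
  also have "\<dots> = (\<integral>\<^sup>+x. ennreal (gauss_density (- x)) * f (- x) \<partial>lborel)"
    by (subst nn_integral_distr) auto
  also have "\<dots> = (\<integral>\<^sup>+x. f (- x) \<partial>std_gauss)"
    unfolding std_gauss_eq_density by (simp add: nn_integral_density gauss_density_def)
  finally show ?thesis ..
qed

lemma distr_std_gauss_uminus: "distr std_gauss borel uminus = (std_gauss :: 'a::euclidean_space measure)"
proof (rule measure_eqI)
  fix A :: "'a set" assume "A \<in> sets (distr std_gauss borel uminus)"
  then have [measurable]: "A \<in> sets borel" by simp
  have preimage: "(uminus -` A :: 'a set) \<in> sets std_gauss"
    using measurable_sets[of "uminus :: 'a \<Rightarrow> 'a" borel borel A] by simp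
  have "emeasure (distr std_gauss borel uminus) A = (\<integral>\<^sup>+x. indicator A (- x) \<partial>std_gauss)"
    by (subst emeasure_distr)
       (auto simp: nn_integral_indicator[symmetric, OF preimage] intro!: nn_integral_cong split: split_indicator)
  also have "\<dots> = emeasure std_gauss A"
    by (subst nn_integral_std_gauss_uminus) auto
  finally show "emeasure (distr std_gauss borel uminus) A = emeasure std_gauss A" .
qed simp

lemma nn_integral_std_gauss_exp_inner:
  "(\<integral>\<^sup>+x. ennreal (exp (a \<bullet> x)) \<partial>std_gauss) = ennreal (exp ((norm (a::'a::euclidean_space))\<^sup>2 / 2))"
proof -
  interpret prob_space "std_gauss :: 'a measure" by (rule prob_space_std_gauss)
  have "(\<integral>\<^sup>+x. ennreal (exp (a \<bullet> x)) \<partial>std_gauss)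
      = (\<integral>\<^sup>+x. ennreal (exp ((norm a)\<^sup>2 / 2)) * (1 * ennreal (exp (a \<bullet> x - (norm a)\<^sup>2 / 2))) \<partial>std_gauss)"
    by (auto intro!: nn_integral_cong simp: ennreal_mult''[symmetric] exp_add[symmetric])
  also have "\<dots> = ennreal (exp ((norm a)\<^sup>2 / 2)) * (\<integral>\<^sup>+x. 1 * ennreal (exp (a \<bullet> x - (norm a)\<^sup>2 / 2)) \<partial>std_gauss)"
    by (subst nn_integral_cmult) auto
  also have "(\<integral>\<^sup>+x. 1 * ennreal (exp (a \<bullet> x - (norm a)\<^sup>2 / 2)) \<partial>std_gauss) = 1"
    by (subst nn_integral_std_gauss_shift) (auto simp: emeasure_space_1[simplified])
  finally show ?thesis by simp
qed

lemma integrable_std_gauss_exp_inner: "integrable std_gauss (\<lambda>x. exp (a \<bullet> (x::'a::euclidean_space)))"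
  by (rule integrableI_nonneg) (auto simp: nn_integral_std_gauss_exp_inner)

lemma integrable_std_gauss_norm: "integrable std_gauss (\<lambda>x. norm (x::'a::euclidean_space))"
proof (rule Bochner_Integration.integrable_bound)
  show "integrable std_gauss (\<lambda>x. \<Sum>b\<in>(Basis::'a set). exp (b \<bullet> x) + exp ((- b) \<bullet> x))"
    by (intro Bochner_Integration.integrable_sum Bochner_Integration.integrable_add integrable_std_gauss_exp_inner)
  have "norm x \<le> (\<Sum>b\<in>(Basis::'a set). exp (b \<bullet> x) + exp ((- b) \<bullet> x))" for x :: 'a
  proof -
    have abs_le: "\<bar>t\<bar> \<le> exp t + exp (- t)" for t :: real
      using exp_ge_add_one_self[of t] exp_ge_add_one_self[of "-t"] exp_gt_zero[of t] exp_gt_zero[of "-t"]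
      by linarith
    have "norm x \<le> (\<Sum>b\<in>(Basis::'a set). \<bar>x \<bullet> b\<bar>)" by (rule norm_le_l1)
    also have "\<dots> \<le> (\<Sum>b\<in>(Basis::'a set). exp (b \<bullet> x) + exp ((- b) \<bullet> x))"
    proof (rule sum_mono)
      show "\<bar>x \<bullet> b\<bar> \<le> exp (b \<bullet> x) + exp ((- b) \<bullet> x)" for b
        using abs_le[of "x \<bullet> b"] by (simp add: inner_commute)
    qed
    finally show ?thesis .
  qed
  then show "AE x in std_gauss. norm (norm x) \<le> norm (\<Sum>b\<in>(Basis::'a set). exp (b \<bullet> x) + exp ((- b) \<bullet> x))"
    by (auto intro!: AE_I2 order_trans[OF _ abs_ge_self])
qed auto

lemma integral_std_gauss_inner: "(\<integral>x. v \<bullet> x \<partial>std_gauss) = (0::real)"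
proof -
  have "(\<integral>x. v \<bullet> x \<partial>std_gauss) = (\<integral>x. v \<bullet> x \<partial>distr std_gauss borel uminus)"
    by (simp add: distr_std_gauss_uminus)
  also have "\<dots> = (\<integral>x. v \<bullet> (- x) \<partial>std_gauss)"
    by (subst integral_distr) auto
  finally show ?thesis by simp
qed

section \<open>Losses with bounded gradient\<close>

lemma has_derivative_imp_difference_quotient_LIMSEQ:
  fixes f :: "'a::euclidean_space \<Rightarrow> real"
  assumes "(f has_derivative (\<lambda>h. G \<bullet> h)) (at w)"
  shows "(\<lambda>m. real (Suc m) * (f (w + inverse (real (Suc m)) *\<^sub>R b) - f w)) \<longlonglongrightarrow> G \<bullet> b"
proof -
  have "((f \<circ> (\<lambda>t. w + t *\<^sub>R b)) has_derivative ((\<lambda>h. G \<bullet> h) \<circ> (\<lambda>t. t *\<^sub>R b))) (at 0)"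
    by (rule diff_chain_at) (auto intro!: derivative_eq_intros simp: assms)
  then have "((\<lambda>t. f (w + t *\<^sub>R b)) has_derivative (\<lambda>t. (G \<bullet> b) * t)) (at 0)"
    by (simp add: o_def mult.commute[of _ "G \<bullet> b"])
  then have "((\<lambda>t. f (w + t *\<^sub>R b)) has_real_derivative (G \<bullet> b)) (at 0)"
    by (simp add: has_field_derivative_def)
  then have "((\<lambda>h. (f (w + h *\<^sub>R b) - f w) / h) \<longlongrightarrow> G \<bullet> b) (at 0)"
    using DERIV_D by fastforce
  then have "((\<lambda>h. (f (w + h *\<^sub>R b) - f w) / h) \<circ> (\<lambda>m. inverse (real (Suc m)))) \<longlonglongrightarrow> G \<bullet> b"
    using LIMSEQ_inverse_real_of_nat unfolding tendsto_at_iff_sequentially by auto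
  then show ?thesis by (simp add: o_def divide_inverse mult.commute)
qed

text \<open>A gradient is a pointwise limit of difference quotients, hence inherits measurability.\<close>

lemma borel_measurable_gradient:
  fixes loss :: "'a::euclidean_space \<Rightarrow> 'z \<Rightarrow> real" and P :: "'m \<Rightarrow> 'a" and Z :: "'m \<Rightarrow> 'z"
  assumes grad: "\<And>w z. ((\<lambda>v. loss v z) has_derivative (\<lambda>h. grad w z \<bullet> h)) (at w)"
    and meas: "\<And>h. (\<lambda>x. loss (P x + h) (Z x)) \<in> borel_measurable M"
  shows "(\<lambda>x. grad (P x) (Z x)) \<in> borel_measurable M"
proof -
  have "(\<lambda>x. grad (P x) (Z x) \<bullet> b) \<in> borel_measurable M" for b
  proof (rule borel_measurable_LIMSEQ_real)
    show "(\<lambda>m. real (Suc m) * (loss (P x + inverse (real (Suc m)) *\<^sub>R b) (Z x) - loss (P x) (Z x)))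
          \<longlonglongrightarrow> grad (P x) (Z x) \<bullet> b" for x
      by (rule has_derivative_imp_difference_quotient_LIMSEQ[OF grad])
    show "(\<lambda>x. real (Suc m) * (loss (P x + inverse (real (Suc m)) *\<^sub>R b) (Z x) - loss (P x) (Z x)))
          \<in> borel_measurable M" for m
      using meas[of 0] meas[of "inverse (real (Suc m)) *\<^sub>R b"] by simp
  qed
  then have "(\<lambda>x. \<Sum>b\<in>Basis. (grad (P x) (Z x) \<bullet> b) *\<^sub>R b) \<in> borel_measurable M"
    by measurable
  then show ?thesis by (simp add: euclidean_representation)
qed

lemma abs_diff_le_of_gradient_bound:
  fixes f :: "'a::euclidean_space \<Rightarrow> real"
  assumes "\<And>w. (f has_derivative (\<lambda>h. G w \<bullet> h)) (at w)" and "\<And>w. norm (G w) \<le> L"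
  shows "\<bar>f w - f w'\<bar> \<le> L * norm (w - w')"
proof -
  have "norm (f w - f w') \<le> L * norm (w - w')"
  proof (rule differentiable_bound[where S=UNIV and f'="\<lambda>x h. G x \<bullet> h"])
    show "onorm (\<lambda>h. G x \<bullet> h) \<le> L" for x
    proof (rule onorm_bound)
      show "0 \<le> L" using assms(2)[of x] norm_ge_zero[of "G x"] by linarith
      show "norm (G x \<bullet> h) \<le> L * norm h" for h
        using Cauchy_Schwarz_ineq2[of "G x" h] assms(2)[of x] by (simp add: mult_right_mono order_trans)
    qed
  qed (use assms(1) in auto)
  then show ?thesis by simp
qed

section \<open>SGLD trajectories\<close>

lemma sgld_traj_cong_noise:
  "(\<And>k. k \<in> {1..t} \<Longrightarrow> xi k = xi' k) \<Longrightarrow>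
   sgld_traj w0 eta sg g s u xi t = sgld_traj w0 eta sg g s u xi' t"
  by (induction t) auto

lemma norm_sgld_traj_diff_le:
  assumes "\<And>w z. norm (g w z) \<le> L"
  shows "norm (sgld_traj w0 eta sg g s u xi t - w0) \<le> (\<Sum>k=1..t. \<bar>eta k\<bar> * L + \<bar>sg k\<bar> * norm (xi k))"
proof (induction t)
  case (Suc t)
  let ?W = "sgld_traj w0 eta sg g s u xi t"
  have "norm (eta (Suc t) *\<^sub>R g ?W (s (u (Suc t)))) \<le> \<bar>eta (Suc t)\<bar> * L"
    using assms by (simp add: mult_left_mono)
  then have "norm (sgld_traj w0 eta sg g s u xi (Suc t) - w0)
      \<le> norm (?W - w0) + \<bar>eta (Suc t)\<bar> * L + \<bar>sg (Suc t)\<bar> * norm (xi (Suc t))"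
    using norm_triangle_ineq4[of "?W - w0" "eta (Suc t) *\<^sub>R g ?W (s (u (Suc t)))"]
      norm_triangle_ineq[of "?W - w0 - eta (Suc t) *\<^sub>R g ?W (s (u (Suc t)))" "sg (Suc t) *\<^sub>R xi (Suc t)"]
    by (simp add: algebra_simps)
  also have "\<dots> \<le> (\<Sum>k=1..Suc t. \<bar>eta k\<bar> * L + \<bar>sg k\<bar> * norm (xi k))"
    using Suc by (simp add: sum.atLeast1_atMost_eq)
  finally show ?case .
qed simp

lemma borel_measurable_sgld_traj:
  fixes g :: "'a::euclidean_space \<Rightarrow> 'z \<Rightarrow> 'a"
  assumes "\<And>k. k \<in> {1..t} \<Longrightarrow> (\<lambda>m. X m k) \<in> borel_measurable M"
    and "\<And>W k. W \<in> borel_measurable M \<Longrightarrow> k \<in> {1..t} \<Longrightarrow> (\<lambda>m. g (W m) (S m (u k))) \<in> borel_measurable M"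
  shows "(\<lambda>m. sgld_traj w0 eta sg g (S m) u (X m) t) \<in> borel_measurable M"
  using assms
proof (induction t)
  case (Suc t)
  then have IH: "(\<lambda>m. sgld_traj w0 eta sg g (S m) u (X m) t) \<in> borel_measurable M"
    by auto
  have "(\<lambda>m. g (sgld_traj w0 eta sg g (S m) u (X m) t) (S m (u (Suc t)))) \<in> borel_measurable M"
    using Suc.prems(2)[OF IH] by auto
  moreover have "(\<lambda>m. X m (Suc t)) \<in> borel_measurable M"
    using Suc.prems(1) by auto
  ultimately show ?case using IH by simp
qed simp

section \<open>Girsanov's theorem for SGLD\<close>

text \<open>Steps in \<open>D\<close> are made independent of the data by absorbing their gradient step into the
  noise: \<open>sgld_drift\<close> is the noise shift that does so, and \<open>sgld_log_density\<close> the logarithm of the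
  resulting likelihood ratio.\<close>

definition drop_steps :: "nat set \<Rightarrow> (nat \<Rightarrow> real) \<Rightarrow> nat \<Rightarrow> real" where
  "drop_steps D eta k = (if k \<in> D then 0 else eta k)"

definition sgld_drift :: "'a::euclidean_space \<Rightarrow> (nat \<Rightarrow> real) \<Rightarrow> (nat \<Rightarrow> real) \<Rightarrow> ('a \<Rightarrow> 'z \<Rightarrow> 'a)
    \<Rightarrow> (nat \<Rightarrow> 'z) \<Rightarrow> (nat \<Rightarrow> nat) \<Rightarrow> nat set \<Rightarrow> nat \<Rightarrow> (nat \<Rightarrow> 'a) \<Rightarrow> 'a" where
  "sgld_drift w0 eta sg g s u D k xi =
     (if k \<in> D then eta k / sg k else 0) *\<^sub>R g (sgld_traj w0 eta sg g s u xi (k - 1)) (s (u k))"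

definition sgld_log_density :: "'a::euclidean_space \<Rightarrow> (nat \<Rightarrow> real) \<Rightarrow> (nat \<Rightarrow> real) \<Rightarrow> ('a \<Rightarrow> 'z \<Rightarrow> 'a)
    \<Rightarrow> (nat \<Rightarrow> 'z) \<Rightarrow> (nat \<Rightarrow> nat) \<Rightarrow> nat set \<Rightarrow> nat \<Rightarrow> (nat \<Rightarrow> 'a) \<Rightarrow> real" where
  "sgld_log_density w0 eta sg g s u D T xi =
     (\<Sum>k=1..T. sgld_drift w0 eta sg g s u D k xi \<bullet> xi k - (norm (sgld_drift w0 eta sg g s u D k xi))\<^sup>2 / 2)"

lemma sgld_drift_cong_noise:
  "(\<And>j. j \<in> {1..<k} \<Longrightarrow> xi j = xi' j) \<Longrightarrow> sgld_drift w0 eta sg g s u D k xi = sgld_drift w0 eta sg g s u D k xi'"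
  unfolding sgld_drift_def by (subst sgld_traj_cong_noise[of "k - 1" xi xi']) auto

lemma sgld_log_density_cong_noise:
  assumes "\<And>j. j \<in> {1..T} \<Longrightarrow> xi j = xi' j"
  shows "sgld_log_density w0 eta sg g s u D T xi = sgld_log_density w0 eta sg g s u D T xi'"
proof -
  have "sgld_drift w0 eta sg g s u D k xi = sgld_drift w0 eta sg g s u D k xi'" if "k \<in> {1..T}" for k
    using that assms by (intro sgld_drift_cong_noise) auto
  then show ?thesis
    unfolding sgld_log_density_def using assms by (intro sum.cong) auto
qed

lemma sgld_log_density_Suc:
  "sgld_log_density w0 eta sg g s u D (Suc T) xi = sgld_log_density w0 eta sg g s u D T xi +
     (sgld_drift w0 eta sg g s u D (Suc T) xi \<bullet> xi (Suc T) - (norm (sgld_drift w0 eta sg g s u D (Suc T) xi))\<^sup>2 / 2)"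
  unfolding sgld_log_density_def by (simp add: sum.atLeast1_atMost_eq)

lemma borel_measurable_sgld_traj_noise:
  fixes g :: "'a::euclidean_space \<Rightarrow> 'z \<Rightarrow> 'a"
  assumes g: "\<And>z. (\<lambda>w. g w z) \<in> borel_measurable borel" and "t \<le> T"
  shows "(\<lambda>xi. sgld_traj w0 eta sg g s u xi t) \<in> borel_measurable (PiM {1..T} (\<lambda>_. std_gauss :: 'a measure))"
proof (rule borel_measurable_sgld_traj[where X="\<lambda>x. x" and S="\<lambda>_. s"])
  show "(\<lambda>m. m k) \<in> borel_measurable (PiM {1..T} (\<lambda>_. std_gauss :: 'a measure))" if "k \<in> {1..t}" for k
    using that assms by (intro measurable_PiM_component_rev) auto
  show "(\<lambda>m. g (W m) (s (u k))) \<in> borel_measurable (PiM {1..T} (\<lambda>_. std_gauss :: 'a measure))"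
    if "W \<in> borel_measurable (PiM {1..T} (\<lambda>_. std_gauss :: 'a measure))" for W k
    using measurable_compose[OF that g] by simp
qed

lemma borel_measurable_sgld_drift_noise:
  fixes g :: "'a::euclidean_space \<Rightarrow> 'z \<Rightarrow> 'a"
  assumes g: "\<And>z. (\<lambda>w. g w z) \<in> borel_measurable borel" and "k \<le> T"
  shows "sgld_drift w0 eta sg g s u D k \<in> borel_measurable (PiM {1..T} (\<lambda>_. std_gauss :: 'a measure))"
proof -
  have "(\<lambda>xi. sgld_traj w0 eta sg g s u xi (k - 1)) \<in> borel_measurable (PiM {1..T} (\<lambda>_. std_gauss :: 'a measure))"
    by (rule borel_measurable_sgld_traj_noise) (use assms in auto)
  from measurable_compose[OF this g[of "s (u k)"]] show ?thesis
    unfolding sgld_drift_def by measurable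
qed

lemma borel_measurable_sgld_log_density:
  fixes g :: "'a::euclidean_space \<Rightarrow> 'z \<Rightarrow> 'a"
  assumes g: "\<And>z. (\<lambda>w. g w z) \<in> borel_measurable borel" and "T \<le> T'"
  shows "sgld_log_density w0 eta sg g s u D T \<in> borel_measurable (PiM {1..T'} (\<lambda>_. std_gauss :: 'a measure))"
proof -
  have "(\<lambda>xi. sgld_drift w0 eta sg g s u D k xi \<bullet> xi k - (norm (sgld_drift w0 eta sg g s u D k xi))\<^sup>2 / 2)
        \<in> borel_measurable (PiM {1..T'} (\<lambda>_. std_gauss :: 'a measure))" if "k \<in> {1..T}" for k
  proof -
    have [measurable]: "(\<lambda>xi. xi k) \<in> borel_measurable (PiM {1..T'} (\<lambda>_. std_gauss :: 'a measure))"
      using that assms by (intro measurable_PiM_component_rev) auto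
    have [measurable]: "sgld_drift w0 eta sg g s u D k \<in> borel_measurable (PiM {1..T'} (\<lambda>_. std_gauss :: 'a measure))"
      by (rule borel_measurable_sgld_drift_noise) (use that assms in auto)
    show ?thesis by measurable
  qed
  then show ?thesis unfolding sgld_log_density_def by (intro borel_measurable_sum) auto
qed

context
  fixes w0 :: "'a::euclidean_space" and eta sg :: "nat \<Rightarrow> real" and g :: "'a \<Rightarrow> 'z \<Rightarrow> 'a"
    and s :: "nat \<Rightarrow> 'z" and u :: "nat \<Rightarrow> nat" and D :: "nat set"
  assumes g_measurable: "\<And>z. (\<lambda>w. g w z) \<in> borel_measurable borel"
    and sg_nonzero: "\<And>k. k \<in> D \<Longrightarrow> sg k \<noteq> 0"
begin

lemma nn_integral_std_gauss_sgld_step: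
  fixes F :: "'a \<Rightarrow> ennreal" and k :: nat and w :: 'a and z :: 'z
  assumes [measurable]: "F \<in> borel_measurable borel"
  defines "a \<equiv> (if k \<in> D then eta k / sg k else 0) *\<^sub>R g w z"
  shows "(\<integral>\<^sup>+y. F (w - eta k *\<^sub>R g w z + sg k *\<^sub>R y) * ennreal (exp (a \<bullet> y - (norm a)\<^sup>2 / 2)) \<partial>std_gauss)
       = (\<integral>\<^sup>+y. F (w - drop_steps D eta k *\<^sub>R g w z + sg k *\<^sub>R y) \<partial>std_gauss)"
proof -
  have "sg k *\<^sub>R a = (eta k - drop_steps D eta k) *\<^sub>R g w z"
    using sg_nonzero by (simp add: a_def drop_steps_def)
  then have shift: "w - eta k *\<^sub>R g w z + sg k *\<^sub>R (y + a) = w - drop_steps D eta k *\<^sub>R g w z + sg k *\<^sub>R y" for y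
    by (simp add: scaleR_add_right algebra_simps)
  have "(\<integral>\<^sup>+y. F (w - eta k *\<^sub>R g w z + sg k *\<^sub>R y) * ennreal (exp (a \<bullet> y - (norm a)\<^sup>2 / 2)) \<partial>std_gauss)
      = (\<integral>\<^sup>+y. F (w - eta k *\<^sub>R g w z + sg k *\<^sub>R (y + a)) \<partial>std_gauss)"
    by (rule nn_integral_std_gauss_shift) measurable
  then show ?thesis
    by (simp only: shift)
qed

lemma sgld_girsanov:
  fixes F :: "'a \<Rightarrow> ennreal"
  assumes "F \<in> borel_measurable borel"
  shows "(\<integral>\<^sup>+xi. F (sgld_traj w0 eta sg g s u xi T) * ennreal (exp (sgld_log_density w0 eta sg g s u D T xi))
           \<partial>PiM {1..T} (\<lambda>_. std_gauss))
       = (\<integral>\<^sup>+xi. F (sgld_traj w0 (drop_steps D eta) sg g s u xi T) \<partial>PiM {1..T} (\<lambda>_. std_gauss))"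
  using assms
proof (induction T arbitrary: F)
  case 0
  then show ?case by (simp add: sgld_log_density_def PiM_empty)
next
  case (Suc T)
  interpret product_sigma_finite "\<lambda>_::nat. std_gauss :: 'a measure"
    by (rule product_sigma_finite_std_gauss)
  note [measurable] = Suc.prems g_measurable
  define z where "z = s (u (Suc T))"
  define H where "H w = (\<integral>\<^sup>+y. F (w - drop_steps D eta (Suc T) *\<^sub>R g w z + sg (Suc T) *\<^sub>R y) \<partial>std_gauss)" for w
  have [measurable]: "H \<in> borel_measurable borel"
    unfolding H_def by measurable
  have insert_Suc: "{1..Suc T} = insert (Suc T) {1..T}" by auto
  have traj_upd: "sgld_traj w0 et sg g s u (xi(Suc T := y)) T = sgld_traj w0 et sg g s u xi T" for et xi y
    by (rule sgld_traj_cong_noise) auto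
  let ?LR = "\<lambda>T xi. ennreal (exp (sgld_log_density w0 eta sg g s u D T xi))"
  have step: "(\<integral>\<^sup>+y. F (sgld_traj w0 eta sg g s u (xi(Suc T := y)) (Suc T)) * ?LR (Suc T) (xi(Suc T := y)) \<partial>std_gauss)
      = H (sgld_traj w0 eta sg g s u xi T) * ?LR T xi" for xi
  proof -
    define w where "w = sgld_traj w0 eta sg g s u xi T"
    define a where "a = sgld_drift w0 eta sg g s u D (Suc T) xi"
    have a_upd: "sgld_drift w0 eta sg g s u D (Suc T) (xi(Suc T := y)) = a" for y
      unfolding a_def by (rule sgld_drift_cong_noise) auto
    have a_eq: "a = (if Suc T \<in> D then eta (Suc T) / sg (Suc T) else 0) *\<^sub>R g w z"
      by (simp add: a_def sgld_drift_def w_def z_def)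
    have LR_upd: "sgld_log_density w0 eta sg g s u D T (xi(Suc T := y)) = sgld_log_density w0 eta sg g s u D T xi" for y
      by (rule sgld_log_density_cong_noise) auto
    have "(\<integral>\<^sup>+y. F (sgld_traj w0 eta sg g s u (xi(Suc T := y)) (Suc T)) * ?LR (Suc T) (xi(Suc T := y)) \<partial>std_gauss)
        = (\<integral>\<^sup>+y. ?LR T xi * (F (w - eta (Suc T) *\<^sub>R g w z + sg (Suc T) *\<^sub>R y)
             * ennreal (exp (a \<bullet> y - (norm a)\<^sup>2 / 2))) \<partial>std_gauss)"
      by (intro nn_integral_cong)
         (simp add: sgld_log_density_Suc traj_upd a_upd LR_upd w_def z_def exp_add ennreal_mult'' mult_ac)
    also have "\<dots> = ?LR T xi * (\<integral>\<^sup>+y. F (w - eta (Suc T) *\<^sub>R g w z + sg (Suc T) *\<^sub>R y)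
             * ennreal (exp (a \<bullet> y - (norm a)\<^sup>2 / 2)) \<partial>std_gauss)"
      by (rule nn_integral_cmult) measurable
    also have "(\<integral>\<^sup>+y. F (w - eta (Suc T) *\<^sub>R g w z + sg (Suc T) *\<^sub>R y)
             * ennreal (exp (a \<bullet> y - (norm a)\<^sup>2 / 2)) \<partial>std_gauss) = H w"
      unfolding H_def a_eq by (rule nn_integral_std_gauss_sgld_step[OF Suc.prems])
    also have "?LR T xi * H w = H w * ?LR T xi"
      by (rule mult.commute)
    finally show ?thesis unfolding w_def .
  qed
  have "(\<integral>\<^sup>+xi. F (sgld_traj w0 eta sg g s u xi (Suc T)) * ?LR (Suc T) xi \<partial>PiM {1..Suc T} (\<lambda>_. std_gauss))
      = (\<integral>\<^sup>+xi. (\<integral>\<^sup>+y. F (sgld_traj w0 eta sg g s u (xi(Suc T := y)) (Suc T)) * ?LR (Suc T) (xi(Suc T := y))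
           \<partial>std_gauss) \<partial>PiM {1..T} (\<lambda>_. std_gauss))"
    unfolding insert_Suc
  proof (rule product_nn_integral_insert)
    show "(\<lambda>xi. F (sgld_traj w0 eta sg g s u xi (Suc T)) * ?LR (Suc T) xi)
       \<in> borel_measurable (PiM (insert (Suc T) {1..T}) (\<lambda>_. std_gauss))"
      using borel_measurable_sgld_traj_noise[where g=g, OF g_measurable, of "Suc T" "Suc T" w0 eta]
        borel_measurable_sgld_log_density[where g=g, OF g_measurable, of "Suc T" "Suc T" w0 eta sg s u D]
      unfolding insert_Suc by measurable
  qed auto
  also have "\<dots> = (\<integral>\<^sup>+xi. H (sgld_traj w0 eta sg g s u xi T) * ?LR T xi \<partial>PiM {1..T} (\<lambda>_. std_gauss))"
    by (intro nn_integral_cong step)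
  also have "\<dots> = (\<integral>\<^sup>+xi. H (sgld_traj w0 (drop_steps D eta) sg g s u xi T) \<partial>PiM {1..T} (\<lambda>_. std_gauss))"
    by (rule Suc.IH) measurable
  also have "\<dots> = (\<integral>\<^sup>+xi. (\<integral>\<^sup>+y. F (sgld_traj w0 (drop_steps D eta) sg g s u (xi(Suc T := y)) (Suc T)) \<partial>std_gauss)
       \<partial>PiM {1..T} (\<lambda>_. std_gauss))"
    by (simp add: H_def traj_upd z_def)
  also have "\<dots> = (\<integral>\<^sup>+xi. F (sgld_traj w0 (drop_steps D eta) sg g s u xi (Suc T)) \<partial>PiM {1..Suc T} (\<lambda>_. std_gauss))"
    unfolding insert_Suc
  proof (rule product_nn_integral_insert[symmetric])
    show "(\<lambda>xi. F (sgld_traj w0 (drop_steps D eta) sg g s u xi (Suc T)))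
       \<in> borel_measurable (PiM (insert (Suc T) {1..T}) (\<lambda>_. std_gauss))"
      using borel_measurable_sgld_traj_noise[where g=g, OF g_measurable, of "Suc T" "Suc T" w0 "drop_steps D eta"]
      unfolding insert_Suc by measurable
  qed auto
  finally show ?case .
qed

end

section \<open>The generalization gap for a fixed index sequence\<close>

context
  fixes \<mu> :: "'z measure" and loss :: "'a::euclidean_space \<Rightarrow> 'z \<Rightarrow> real" and grad :: "'a \<Rightarrow> 'z \<Rightarrow> 'a"
    and R L :: real
  assumes prob_space_\<mu>: "prob_space \<mu>"
    and loss_measurable: "(\<lambda>(w, z). loss w z) \<in> borel_measurable (borel \<Otimes>\<^sub>M \<mu>)"
    and loss_gradient: "\<And>w z. ((\<lambda>v. loss v z) has_derivative (\<lambda>h. grad w z \<bullet> h)) (at w)"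
    and R_nonneg: "R \<ge> 0"
    and loss_subgaussian: "\<And>w. subgaussian \<mu> (loss w) R"
    and grad_bounded: "\<And>w z. norm (grad w z) \<le> L"
begin

lemma L_nonneg: "L \<ge> 0"
  using grad_bounded[of undefined undefined] norm_ge_zero by (rule order_trans[rotated])

lemma loss_lipschitz: "\<bar>loss w z - loss w' z\<bar> \<le> L * norm (w - w')"
  using loss_gradient grad_bounded by (rule abs_diff_le_of_gradient_bound)

lemma continuous_on_loss: "continuous_on UNIV (\<lambda>w. loss w z)"
  by (rule lipschitz_on_continuous_on[where L=L], rule lipschitz_onI)
     (use loss_lipschitz L_nonneg in \<open>auto simp: dist_norm\<close>)

lemma borel_measurable_loss[measurable]: "(\<lambda>w. loss w z) \<in> borel_measurable borel"
  by (rule borel_measurable_continuous_onI[OF continuous_on_loss])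

lemma borel_measurable_grad[measurable]: "(\<lambda>w. grad w z) \<in> borel_measurable borel"
proof -
  have "(\<lambda>x. grad (id x) ((\<lambda>_. z) x)) \<in> borel_measurable borel"
  proof (rule borel_measurable_gradient[OF loss_gradient])
    fix h :: 'a
    have "continuous_on UNIV (\<lambda>x. loss (x + h) z)"
      using continuous_on_compose[OF continuous_on_add[OF continuous_on_id continuous_on_const]
          continuous_on_subset[OF continuous_on_loss[of z]]]
      by (simp add: o_def)
    then show "(\<lambda>x. loss (id x + h) ((\<lambda>_. z) x)) \<in> borel_measurable borel"
      by (simp add: borel_measurable_continuous_onI)
  qed
  then show ?thesis by simp
qed

lemma borel_measurable_grad_pair[measurable]:
  "(\<lambda>p. grad (fst p) (snd p)) \<in> borel_measurable (borel \<Otimes>\<^sub>M \<mu>)"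
proof (rule borel_measurable_gradient[OF loss_gradient])
  fix h :: 'a
  have "(\<lambda>p::'a \<times> 'z. (fst p + h, snd p)) \<in> measurable (borel \<Otimes>\<^sub>M \<mu>) (borel \<Otimes>\<^sub>M \<mu>)"
    by measurable
  from measurable_compose[OF this loss_measurable]
  show "(\<lambda>x. loss (fst x + h) (snd x)) \<in> borel_measurable (borel \<Otimes>\<^sub>M \<mu>)"
    by (simp add: case_prod_beta)
qed

lemma integrable_loss: "integrable \<mu> (loss w)"
  using loss_subgaussian[of w] unfolding subgaussian_def by auto

lemma pop_risk_lipschitz: "\<bar>pop_risk \<mu> loss w - pop_risk \<mu> loss w'\<bar> \<le> L * norm (w - w')"
proof -
  interpret prob_space \<mu> by (rule prob_space_\<mu>)
  have "\<bar>pop_risk \<mu> loss w - pop_risk \<mu> loss w'\<bar> = \<bar>\<integral>z. loss w z - loss w' z \<partial>\<mu>\<bar>"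
    unfolding pop_risk_def using integrable_loss[of w] integrable_loss[of w'] by simp
  also have "\<dots> \<le> (\<integral>z. \<bar>loss w z - loss w' z\<bar> \<partial>\<mu>)" by (rule integral_abs_bound)
  also have "\<dots> \<le> (\<integral>z. L * norm (w - w') \<partial>\<mu>)"
    using integrable_loss[of w] integrable_loss[of w'] by (intro integral_mono) (auto simp: loss_lipschitz)
  also have "\<dots> = L * norm (w - w')" by (simp add: prob_space)
  finally show ?thesis .
qed

lemma borel_measurable_pop_risk[measurable]: "pop_risk \<mu> loss \<in> borel_measurable borel"
proof -
  have "continuous_on UNIV (pop_risk \<mu> loss)"
    by (rule lipschitz_on_continuous_on[where L=L], rule lipschitz_onI)
       (use pop_risk_lipschitz L_nonneg in \<open>auto simp: dist_norm\<close>)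
  then show ?thesis by (rule borel_measurable_continuous_onI)
qed

lemma nn_integral_exp_centered_loss_le:
  "(\<integral>\<^sup>+z. ennreal (exp (l * (loss w z - pop_risk \<mu> loss w))) \<partial>\<mu>) \<le> ennreal (exp (R\<^sup>2 * l\<^sup>2 / 2))"
proof -
  define E where "E = (\<integral>z. exp (l * (loss w z - pop_risk \<mu> loss w)) \<partial>\<mu>)"
  have integrable: "integrable \<mu> (\<lambda>z. exp (l * (loss w z - pop_risk \<mu> loss w)))"
    and ln_E: "ln E \<le> R\<^sup>2 * l\<^sup>2 / 2"
    using loss_subgaussian[of w] unfolding subgaussian_def E_def pop_risk_def by auto
  have "E \<le> exp (R\<^sup>2 * l\<^sup>2 / 2)"
  proof (cases "E > 0")
    case True
    then show ?thesis using ln_E by (metis exp_ln exp_le_cancel_iff)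
  qed (use exp_gt_zero[of "R\<^sup>2 * l\<^sup>2 / 2"] in linarith)
  moreover have "(\<integral>\<^sup>+z. ennreal (exp (l * (loss w z - pop_risk \<mu> loss w))) \<partial>\<mu>) = ennreal E"
    unfolding E_def using integrable by (subst nn_integral_eq_integral) auto
  ultimately show ?thesis by (simp add: ennreal_leI)
qed

context
  fixes n T :: nat and eta sg :: "nat \<Rightarrow> real" and u :: "nat \<Rightarrow> nat" and w0 :: 'a
  assumes sg_nonzero: "\<And>t. t \<in> {1..T} \<Longrightarrow> sg t \<noteq> 0"
    and index_range: "\<And>t. t \<in> {1..T} \<Longrightarrow> u t \<in> {1..n}"
begin

abbreviation "SM \<equiv> PiM {1..n} (\<lambda>_. \<mu>)"
abbreviation "XM \<equiv> PiM {1..T} (\<lambda>_. std_gauss :: 'a measure)"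
abbreviation "OM \<equiv> SM \<Otimes>\<^sub>M XM"
abbreviation "W p \<equiv> sgld_traj w0 eta sg grad (fst p) u (snd p) T"

lemma prob_space_SM: "prob_space SM"
  by (rule prob_space_PiM) (use prob_space_\<mu> in auto)

lemma prob_space_OM: "prob_space OM"
proof -
  interpret S: prob_space SM by (rule prob_space_SM)
  interpret X: prob_space XM by (rule prob_space_PiM_std_gauss)
  interpret pair_prob_space SM XM ..
  show ?thesis by unfold_locales
qed

lemma measurable_sample[measurable]: "j \<in> {1..n} \<Longrightarrow> (\<lambda>p. fst p j) \<in> measurable OM \<mu>"
  by (rule measurable_compose[OF measurable_fst measurable_component_singleton]) simp

lemma borel_measurable_noise[measurable]:
  assumes "k \<in> {1..T}"
  shows "(\<lambda>p. snd p k) \<in> borel_measurable OM"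
proof -
  have "(\<lambda>x. x k) \<in> borel_measurable XM"
    using assms by (intro measurable_PiM_component_rev) auto
  then show ?thesis by measurable
qed

lemma borel_measurable_grad_sample:
  assumes "V \<in> borel_measurable OM" "k \<in> {1..T}"
  shows "(\<lambda>p. grad (V p) (fst p (u k))) \<in> borel_measurable OM"
proof -
  have "(\<lambda>p. (V p, fst p (u k))) \<in> measurable OM (borel \<Otimes>\<^sub>M \<mu>)"
    using assms index_range[of k] by measurable
  from measurable_compose[OF this borel_measurable_grad_pair] show ?thesis by simp
qed

lemma borel_measurable_sgld_traj_OM:
  assumes "t \<le> T"
  shows "(\<lambda>p. sgld_traj w0 eta' sg' grad (fst p) u (snd p) t) \<in> borel_measurable OM"
proof (rule borel_measurable_sgld_traj)
  show "(\<lambda>p. snd p k) \<in> borel_measurable OM" if "k \<in> {1..t}" for k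
    using that assms by (intro borel_measurable_noise) auto
  show "(\<lambda>p. grad (V p) (fst p (u k))) \<in> borel_measurable OM"
    if "V \<in> borel_measurable OM" "k \<in> {1..t}" for V k
    using that assms by (intro borel_measurable_grad_sample) auto
qed

lemma integrable_norm_noise: "k \<in> {1..T} \<Longrightarrow> integrable OM (\<lambda>p. norm (snd p k))"
  using prob_space_SM prob_space_PiM_std_gauss
  by (intro integrable_pair_measure_snd[where f="\<lambda>x. norm (x k)"] integrable_PiM_component[where f=norm]
      integrable_std_gauss_norm prob_space_std_gauss prob_space_imp_sigma_finite)

context
  fixes i :: nat
  assumes i_range: "i \<in> {1..n}"
begin

abbreviation "D \<equiv> {t \<in> {1..T}. u t = i}"
abbreviation "gap p \<equiv> loss (W p) (fst p i) - pop_risk \<mu> loss (W p)"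
abbreviation "drift k p \<equiv> sgld_drift w0 eta sg grad (fst p) u D k (snd p)"
abbreviation "log_lr p \<equiv> sgld_log_density w0 eta sg grad (fst p) u D T (snd p)"

lemma norm_sgld_drift_le:
  "norm (sgld_drift w0 eta sg grad s u D k xi) \<le> \<bar>if k \<in> D then eta k / sg k else 0\<bar> * L"
  unfolding sgld_drift_def using grad_bounded by (simp add: mult_left_mono)

lemma norm_sgld_drift_le_ratio: "norm (sgld_drift w0 eta sg grad s u D k xi) \<le> \<bar>eta k / sg k\<bar> * L"
  by (rule order_trans[OF norm_sgld_drift_le]) (use L_nonneg in \<open>auto intro: mult_right_mono\<close>)

lemma abs_sgld_drift_inner_noise_le:
  "\<bar>sgld_drift w0 eta sg grad s u D k xi \<bullet> xi k\<bar> \<le> \<bar>eta k / sg k\<bar> * L * norm (xi k)"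
  using Cauchy_Schwarz_ineq2[of "sgld_drift w0 eta sg grad s u D k xi" "xi k"]
    mult_right_mono[OF norm_sgld_drift_le_ratio norm_ge_zero]
  by (rule order_trans)

lemma borel_measurable_drift[measurable]: "k \<in> {1..T} \<Longrightarrow> drift k \<in> borel_measurable OM"
  unfolding sgld_drift_def
  by (intro borel_measurable_scaleR borel_measurable_const borel_measurable_grad_sample
      borel_measurable_sgld_traj_OM) auto

lemma borel_measurable_loss_gap:
  "(\<lambda>p. loss (sgld_traj w0 eta' sg' grad (fst p) u (snd p) T) (fst p i)
      - pop_risk \<mu> loss (sgld_traj w0 eta' sg' grad (fst p) u (snd p) T)) \<in> borel_measurable OM"
proof -
  note [measurable] = borel_measurable_sgld_traj_OM[of T eta' sg']
  have "(\<lambda>p. (sgld_traj w0 eta' sg' grad (fst p) u (snd p) T, fst p i)) \<in> measurable OM (borel \<Otimes>\<^sub>M \<mu>)"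
    using i_range by measurable
  from measurable_compose[OF this loss_measurable]
  have "(\<lambda>p. loss (sgld_traj w0 eta' sg' grad (fst p) u (snd p) T) (fst p i)) \<in> borel_measurable OM"
    by simp
  then show ?thesis by measurable
qed

lemma borel_measurable_gap[measurable]: "gap \<in> borel_measurable OM"
  by (rule borel_measurable_loss_gap)

lemma integrable_gap: "integrable OM gap"
proof (rule Bochner_Integration.integrable_bound)
  interpret prob_space OM by (rule prob_space_OM)
  define B where "B p = \<bar>loss w0 (fst p i)\<bar> + \<bar>pop_risk \<mu> loss w0\<bar>
      + 2 * L * (\<Sum>k=1..T. \<bar>eta k\<bar> * L + \<bar>sg k\<bar> * norm (snd p k))" for p :: "(nat \<Rightarrow> 'z) \<times> (nat \<Rightarrow> 'a)"
  have "integrable SM (\<lambda>s. \<bar>loss w0 (s i)\<bar>)"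
    using i_range prob_space_\<mu> integrable_loss[of w0]
    by (intro integrable_PiM_component[where f="\<lambda>z. \<bar>loss w0 z\<bar>"]) auto
  then have "integrable OM (\<lambda>p. \<bar>loss w0 (fst p i)\<bar>)"
    using prob_space_SM prob_space_PiM_std_gauss
    by (intro integrable_pair_measure_fst[where f="\<lambda>s. \<bar>loss w0 (s i)\<bar>"] prob_space_imp_sigma_finite)
  then show "integrable OM B"
    unfolding B_def using integrable_norm_noise
    by (intro Bochner_Integration.integrable_add Bochner_Integration.integrable_mult_right
        Bochner_Integration.integrable_sum integrable_const) auto
  show "AE p in OM. norm (gap p) \<le> norm (B p)"
  proof (rule AE_I2)
    fix p
    have "L * norm (W p - w0) \<le> L * (\<Sum>k=1..T. \<bar>eta k\<bar> * L + \<bar>sg k\<bar> * norm (snd p k))"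
      using norm_sgld_traj_diff_le[OF grad_bounded] L_nonneg by (rule mult_left_mono)
    moreover have "0 \<le> L * (\<Sum>k=1..T. \<bar>eta k\<bar> * L + \<bar>sg k\<bar> * norm (snd p k))"
      using L_nonneg by (intro mult_nonneg_nonneg sum_nonneg) auto
    ultimately show "norm (gap p) \<le> norm (B p)"
      using loss_lipschitz[of "W p" "fst p i" w0] pop_risk_lipschitz[of "W p" w0]
      unfolding B_def real_norm_def by linarith
  qed
qed measurable

lemma integrable_drift_inner_noise: "k \<in> {1..T} \<Longrightarrow> integrable OM (\<lambda>p. drift k p \<bullet> snd p k)"
proof (rule Bochner_Integration.integrable_bound)
  assume k: "k \<in> {1..T}"
  show "integrable OM (\<lambda>p. \<bar>eta k / sg k\<bar> * L * norm (snd p k))"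
    using integrable_norm_noise[OF k] by auto
  show "AE p in OM. norm (drift k p \<bullet> snd p k) \<le> norm (\<bar>eta k / sg k\<bar> * L * norm (snd p k))"
    unfolding real_norm_def by (intro AE_I2 order_trans[OF abs_sgld_drift_inner_noise_le abs_ge_self])
  show "(\<lambda>p. drift k p \<bullet> snd p k) \<in> borel_measurable OM"
    using k by measurable
qed

lemma norm_drift_sq_le:
  assumes "k \<in> {1..T}"
  shows "(norm (drift k p))\<^sup>2 \<le> (if u k = i then (eta k / sg k)\<^sup>2 else 0) * L\<^sup>2"
proof -
  have "(norm (drift k p))\<^sup>2 \<le> (\<bar>if k \<in> D then eta k / sg k else 0\<bar> * L)\<^sup>2"
    by (intro power_mono norm_sgld_drift_le norm_ge_zero)
  then show ?thesis using assms by (cases "u k = i") (simp_all add: power_mult_distrib)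
qed

lemma integrable_norm_drift_sq:
  assumes k: "k \<in> {1..T}"
  shows "integrable OM (\<lambda>p. (norm (drift k p))\<^sup>2 / 2)"
proof -
  interpret prob_space OM by (rule prob_space_OM)
  show ?thesis
  proof (rule integrable_const_bound[where B="(eta k / sg k)\<^sup>2 * L\<^sup>2"])
    have "norm ((norm (drift k p))\<^sup>2 / 2) \<le> (eta k / sg k)\<^sup>2 * L\<^sup>2" for p
    proof -
      have "norm ((norm (drift k p))\<^sup>2 / 2) \<le> (norm (drift k p))\<^sup>2"
        by simp
      also have "\<dots> \<le> (eta k / sg k)\<^sup>2 * L\<^sup>2"
        using norm_drift_sq_le[OF k, of p] by (cases "u k = i") auto
      finally show ?thesis .
    qed
    then show "AE p in OM. norm ((norm (drift k p))\<^sup>2 / 2) \<le> (eta k / sg k)\<^sup>2 * L\<^sup>2"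
      by (intro AE_I2)
  qed (use k in measurable)
qed

text \<open>The drift at step \<open>k\<close> depends only on the noise before step \<open>k\<close>, which is independent of
  the centred noise \<open>\<xi>\<^sub>k\<close>.\<close>

lemma integral_drift_inner_noise: "k \<in> {1..T} \<Longrightarrow> (\<integral>p. drift k p \<bullet> snd p k \<partial>OM) = 0"
proof -
  assume k: "k \<in> {1..T}"
  interpret S: prob_space SM by (rule prob_space_SM)
  interpret X: prob_space XM by (rule prob_space_PiM_std_gauss)
  interpret pair_sigma_finite SM XM ..
  interpret P: product_sigma_finite "\<lambda>_::nat. std_gauss :: 'a measure"
    by (rule product_sigma_finite_std_gauss)
  have "(\<integral>x. sgld_drift w0 eta sg grad s u D k x \<bullet> x k \<partial>XM) = 0" for s
  proof -
    have insert_k: "{1..T} = insert k ({1..T} - {k})" using k by auto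
    have "integrable XM (\<lambda>x. sgld_drift w0 eta sg grad s u D k x \<bullet> x k)"
    proof (rule Bochner_Integration.integrable_bound)
      show "integrable XM (\<lambda>x. \<bar>eta k / sg k\<bar> * L * norm (x k))"
        using k prob_space_std_gauss
        by (intro Bochner_Integration.integrable_mult_right integrable_PiM_component[where f=norm]
            integrable_std_gauss_norm) auto
      show "AE x in XM. norm (sgld_drift w0 eta sg grad s u D k x \<bullet> x k) \<le> norm (\<bar>eta k / sg k\<bar> * L * norm (x k))"
        unfolding real_norm_def by (intro AE_I2 order_trans[OF abs_sgld_drift_inner_noise_le abs_ge_self])
      have "sgld_drift w0 eta sg grad s u D k \<in> borel_measurable XM"
        by (rule borel_measurable_sgld_drift_noise) (use k borel_measurable_grad in auto)
      then show "(\<lambda>x. sgld_drift w0 eta sg grad s u D k x \<bullet> x k) \<in> borel_measurable XM"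
        using k by measurable
    qed
    then have "integrable (PiM (insert k ({1..T} - {k})) (\<lambda>_. std_gauss))
        (\<lambda>x. sgld_drift w0 eta sg grad s u D k x \<bullet> x k)"
      by (simp only: insert_k[symmetric])
    from P.product_integral_insert[OF _ _ this]
    have "(\<integral>x. sgld_drift w0 eta sg grad s u D k x \<bullet> x k \<partial>XM)
        = (\<integral>x. (\<integral>y. sgld_drift w0 eta sg grad s u D k (x(k := y)) \<bullet> y \<partial>std_gauss)
             \<partial>PiM ({1..T} - {k}) (\<lambda>_. std_gauss))"
      by (simp only: insert_k[symmetric]) simp
    also have "\<dots> = (\<integral>x. 0 \<partial>PiM ({1..T} - {k}) (\<lambda>_. std_gauss :: 'a measure))"
    proof (rule Bochner_Integration.integral_cong[OF refl])
      fix x :: "nat \<Rightarrow> 'a"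
      have "sgld_drift w0 eta sg grad s u D k (x(k := y)) = sgld_drift w0 eta sg grad s u D k x" for y
        by (rule sgld_drift_cong_noise) auto
      then show "(\<integral>y. sgld_drift w0 eta sg grad s u D k (x(k := y)) \<bullet> y \<partial>std_gauss) = 0"
        by (simp add: integral_std_gauss_inner)
    qed
    finally show ?thesis by simp
  qed
  then show ?thesis
    using integral_fst'[OF integrable_drift_inner_noise[OF k]] by simp
qed


lemma sgld_traj_drop_steps_update_sample:
  "t \<le> T \<Longrightarrow> sgld_traj w0 (drop_steps D eta') sg' g (s(i := z)) u xi t = sgld_traj w0 (drop_steps D eta') sg' g s u xi t"
  by (induction t) (auto simp: drop_steps_def)

lemma borel_measurable_log_lr[measurable]: "log_lr \<in> borel_measurable OM"
proof -
  have "(\<lambda>p. drift k p \<bullet> snd p k - (norm (drift k p))\<^sup>2 / 2) \<in> borel_measurable OM" if "k \<in> {1..T}" for k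
  proof -
    note [measurable] = borel_measurable_drift[OF that] borel_measurable_noise[OF that]
    show ?thesis by measurable
  qed
  then show ?thesis
    unfolding sgld_log_density_def by (intro borel_measurable_sum) auto
qed

text \<open>Once the steps that read the sample \<open>Z\<^sub>i\<close> are dropped, the trajectory is independent of
  \<open>Z\<^sub>i\<close>, so sub-Gaussianity applies conditionally on everything else.\<close>

lemma nn_integral_exp_gap_drop_steps_le:
  assumes "xi \<in> space XM"
  defines "V \<equiv> \<lambda>s. sgld_traj w0 (drop_steps D eta) sg grad s u xi T"
  shows "(\<integral>\<^sup>+s. ennreal (exp (l * (loss (V s) (s i) - pop_risk \<mu> loss (V s)))) \<partial>SM) \<le> ennreal (exp (R\<^sup>2 * l\<^sup>2 / 2))"
proof -
  define I where "I = {1..n} - {i}"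
  have insert_i: "{1..n} = insert i I" "i \<notin> I" "finite I"
    using i_range by (auto simp: I_def)
  interpret P: product_sigma_finite "\<lambda>_::nat. \<mu>"
    unfolding product_sigma_finite_def using prob_space_\<mu> prob_space_imp_sigma_finite by blast
  interpret PI: prob_space "PiM I (\<lambda>_. \<mu>)"
    by (rule prob_space_PiM) (use prob_space_\<mu> in auto)
  let ?F = "\<lambda>s. ennreal (exp (l * (loss (V s) (s i) - pop_risk \<mu> loss (V s))))"
  have "(\<lambda>p. ennreal (exp (l * (loss (sgld_traj w0 (drop_steps D eta) sg grad (fst p) u (snd p) T) (fst p i)
      - pop_risk \<mu> loss (sgld_traj w0 (drop_steps D eta) sg grad (fst p) u (snd p) T)))))
      \<in> borel_measurable OM"
    using borel_measurable_loss_gap[of "drop_steps D eta" sg] by measurable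
  from measurable_compose[OF measurable_Pair2'[OF assms(1)] this]
  have "?F \<in> borel_measurable (PiM (insert i I) (\<lambda>_. \<mu>))"
    by (simp add: V_def insert_i(1)[symmetric])
  then have "(\<integral>\<^sup>+s. ?F s \<partial>SM) = (\<integral>\<^sup>+s. (\<integral>\<^sup>+z. ?F (s(i := z)) \<partial>\<mu>) \<partial>PiM I (\<lambda>_. \<mu>))"
    unfolding insert_i(1) by (rule P.product_nn_integral_insert[OF insert_i(3,2)])
  also have "\<dots> = (\<integral>\<^sup>+s. (\<integral>\<^sup>+z. ennreal (exp (l * (loss (V s) z - pop_risk \<mu> loss (V s)))) \<partial>\<mu>) \<partial>PiM I (\<lambda>_. \<mu>))"
    by (simp only: V_def sgld_traj_drop_steps_update_sample[OF order_refl] fun_upd_same)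
  also have "\<dots> \<le> (\<integral>\<^sup>+s. ennreal (exp (R\<^sup>2 * l\<^sup>2 / 2)) \<partial>PiM I (\<lambda>_. \<mu>))"
    by (intro nn_integral_mono nn_integral_exp_centered_loss_le)
  also have "\<dots> = ennreal (exp (R\<^sup>2 * l\<^sup>2 / 2))"
    using PI.emeasure_space_1 by simp
  finally show ?thesis .
qed

lemma nn_integral_exp_tilted_gap_le:
  "(\<integral>\<^sup>+p. ennreal (exp (l * gap p + log_lr p)) \<partial>OM) \<le> ennreal (exp (R\<^sup>2 * l\<^sup>2 / 2))"
proof -
  interpret S: prob_space SM by (rule prob_space_SM)
  interpret X: prob_space XM by (rule prob_space_PiM_std_gauss)
  interpret pair_sigma_finite SM XM ..
  let ?F = "\<lambda>z w. ennreal (exp (l * (loss w z - pop_risk \<mu> loss w)))"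
  let ?V = "\<lambda>s xi. sgld_traj w0 (drop_steps D eta) sg grad s u xi T"
  have "(\<integral>\<^sup>+p. ennreal (exp (l * gap p + log_lr p)) \<partial>OM)
      = (\<integral>\<^sup>+s. (\<integral>\<^sup>+xi. ennreal (exp (l * gap (s, xi) + log_lr (s, xi))) \<partial>XM) \<partial>SM)"
    by (rule X.nn_integral_fst[symmetric]) measurable
  also have "\<dots> = (\<integral>\<^sup>+s. (\<integral>\<^sup>+xi. ?F (s i) (?V s xi) \<partial>XM) \<partial>SM)"
  proof (rule nn_integral_cong)
    fix s :: "nat \<Rightarrow> 'z"
    have "(\<integral>\<^sup>+xi. ennreal (exp (l * gap (s, xi) + log_lr (s, xi))) \<partial>XM)
        = (\<integral>\<^sup>+xi. ?F (s i) (sgld_traj w0 eta sg grad s u xi T)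
             * ennreal (exp (sgld_log_density w0 eta sg grad s u D T xi)) \<partial>XM)"
      by (simp add: exp_add ennreal_mult)
    also have "\<dots> = (\<integral>\<^sup>+xi. ?F (s i) (?V s xi) \<partial>XM)"
      by (rule sgld_girsanov) (use sg_nonzero in auto)
    finally show "(\<integral>\<^sup>+xi. ennreal (exp (l * gap (s, xi) + log_lr (s, xi))) \<partial>XM)
        = (\<integral>\<^sup>+xi. ?F (s i) (?V s xi) \<partial>XM)" .
  qed
  also have "\<dots> = (\<integral>\<^sup>+xi. (\<integral>\<^sup>+s. ?F (s i) (?V s xi) \<partial>SM) \<partial>XM)"
  proof (rule Fubini'[symmetric])
    show "(\<lambda>(s, xi). ?F (s i) (?V s xi)) \<in> borel_measurable OM"
      using borel_measurable_loss_gap[of "drop_steps D eta" sg] by (simp add: case_prod_beta) measurable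
  qed
  also have "\<dots> \<le> (\<integral>\<^sup>+xi. ennreal (exp (R\<^sup>2 * l\<^sup>2 / 2)) \<partial>XM)"
    by (intro nn_integral_mono nn_integral_exp_gap_drop_steps_le)
  also have "\<dots> = ennreal (exp (R\<^sup>2 * l\<^sup>2 / 2))"
    using X.emeasure_space_1 by simp
  finally show ?thesis .
qed

lemma mult_integral_gap_le:
  "l * (\<integral>p. gap p \<partial>OM) \<le> l\<^sup>2 * (R\<^sup>2 / 2) + (\<Sum>k=1..T. if u k = i then (eta k / sg k)\<^sup>2 else 0) * L\<^sup>2 / 2"
proof -
  interpret prob_space OM by (rule prob_space_OM)
  have integrable_log_lr: "integrable OM log_lr"
    unfolding sgld_log_density_def
    by (intro Bochner_Integration.integrable_sum Bochner_Integration.integrable_diff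
        integrable_drift_inner_noise integrable_norm_drift_sq) auto
  have "(\<integral>p. log_lr p \<partial>OM) = (\<Sum>k=1..T. \<integral>p. drift k p \<bullet> snd p k - (norm (drift k p))\<^sup>2 / 2 \<partial>OM)"
    unfolding sgld_log_density_def
    by (intro Bochner_Integration.integral_sum Bochner_Integration.integrable_diff
        integrable_drift_inner_noise integrable_norm_drift_sq) auto
  also have "\<dots> = - (\<Sum>k=1..T. (\<integral>p. (norm (drift k p))\<^sup>2 / 2 \<partial>OM))"
    unfolding sum_negf[symmetric]
  proof (intro sum.cong refl)
    fix k assume k: "k \<in> {1..T}"
    show "(\<integral>p. drift k p \<bullet> snd p k - (norm (drift k p))\<^sup>2 / 2 \<partial>OM) = - (\<integral>p. (norm (drift k p))\<^sup>2 / 2 \<partial>OM)"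
      using Bochner_Integration.integral_diff[OF integrable_drift_inner_noise[OF k] integrable_norm_drift_sq[OF k]]
      by (simp only: integral_drift_inner_noise[OF k] diff_0)
  qed
  also have "\<dots> \<ge> - (\<Sum>k=1..T. (if u k = i then (eta k / sg k)\<^sup>2 else 0) * L\<^sup>2 / 2)"
  proof -
    have "(\<integral>p. (norm (drift k p))\<^sup>2 / 2 \<partial>OM) \<le> (if u k = i then (eta k / sg k)\<^sup>2 else 0) * L\<^sup>2 / 2"
      if "k \<in> {1..T}" for k
    proof -
      have "(\<integral>p. (norm (drift k p))\<^sup>2 / 2 \<partial>OM) \<le> (\<integral>p. (if u k = i then (eta k / sg k)\<^sup>2 else 0) * L\<^sup>2 / 2 \<partial>OM)"
        using norm_drift_sq_le[OF that]
        by (intro integral_mono integrable_norm_drift_sq[OF that] integrable_const) (auto intro: divide_right_mono)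
      then show ?thesis using prob_space by simp
    qed
    then show ?thesis by (intro le_imp_neg_le sum_mono) auto
  qed
  finally have "- (\<integral>p. log_lr p \<partial>OM) \<le> (\<Sum>k=1..T. if u k = i then (eta k / sg k)\<^sup>2 else 0) * L\<^sup>2 / 2"
    by (simp add: sum_distrib_right sum_divide_distrib)
  moreover have "l * (\<integral>p. gap p \<partial>OM) + (\<integral>p. log_lr p \<partial>OM) \<le> R\<^sup>2 * l\<^sup>2 / 2"
    using integral_le_ln_of_nn_integral_exp_le[OF _ nn_integral_exp_tilted_gap_le] integrable_gap integrable_log_lr
    by simp
  ultimately show ?thesis by (simp add: algebra_simps)
qed

lemma abs_integral_gap_le:
  "\<bar>\<integral>p. gap p \<partial>OM\<bar> \<le> R * L * sqrt (\<Sum>k=1..T. if u k = i then (eta k / sg k)\<^sup>2 else 0)"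
proof -
  define S where "S = (\<Sum>k=1..T. if u k = i then (eta k / sg k)\<^sup>2 else 0)"
  have "S \<ge> 0" unfolding S_def by (intro sum_nonneg) auto
  then have "\<bar>\<integral>p. gap p \<partial>OM\<bar> \<le> 2 * sqrt (R\<^sup>2 / 2 * (S * L\<^sup>2 / 2))"
    using mult_integral_gap_le unfolding S_def[symmetric] by (intro abs_le_of_forall_linear_le_quadratic) auto
  also have "\<dots> = sqrt ((R * L)\<^sup>2 * S)"
    by (simp add: power_mult_distrib real_sqrt_mult real_sqrt_divide)
  also have "\<dots> = R * L * sqrt S"
    using R_nonneg L_nonneg by (simp add: real_sqrt_mult)
  finally show ?thesis unfolding S_def .
qed

end

lemma abs_integral_sgld_gen_gap_le:
  assumes "n \<ge> 1"
  defines "F \<equiv> \<lambda>(s, xi). let W = sgld_traj w0 eta sg grad s u xi T in pop_risk \<mu> loss W - emp_risk loss n s W"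
  shows "integrable OM F"
    and "\<bar>\<integral>p. F p \<partial>OM\<bar> \<le> R * L / real n * (\<Sum>i=1..n. sqrt (\<Sum>k=1..T. if u k = i then (eta k / sg k)\<^sup>2 else 0))"
proof -
  let ?gap = "\<lambda>i p. loss (W p) (fst p i) - pop_risk \<mu> loss (W p)"
  have F_eq: "F = (\<lambda>p. - (\<Sum>i=1..n. ?gap i p) / real n)"
    using assms(1) by (intro ext) (simp add: F_def Let_def case_prod_beta emp_risk_def sum_subtractf field_simps)
  show "integrable OM F"
    unfolding F_eq
    by (intro Bochner_Integration.integrable_divide Bochner_Integration.integrable_minus
        Bochner_Integration.integrable_sum integrable_gap) auto
  have "\<bar>\<integral>p. F p \<partial>OM\<bar> = \<bar>\<Sum>i=1..n. (\<integral>p. ?gap i p \<partial>OM)\<bar> / real n"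
    unfolding F_eq using integrable_gap by (simp add: Bochner_Integration.integral_sum)
  also have "\<dots> \<le> (\<Sum>i=1..n. R * L * sqrt (\<Sum>k=1..T. if u k = i then (eta k / sg k)\<^sup>2 else 0)) / real n"
    using abs_integral_gap_le by (intro divide_right_mono order_trans[OF sum_abs sum_mono]) auto
  also have "\<dots> = R * L / real n * (\<Sum>i=1..n. sqrt (\<Sum>k=1..T. if u k = i then (eta k / sg k)\<^sup>2 else 0))"
    by (simp add: sum_distrib_left sum_divide_distrib)
  finally show "\<bar>\<integral>p. F p \<partial>OM\<bar> \<le> R * L / real n * (\<Sum>i=1..n. sqrt (\<Sum>k=1..T. if u k = i then (eta k / sg k)\<^sup>2 else 0))" .
qed

end

end

section \<open>Sampling without replacement\<close>

lemma harm_le_one_plus_ln: "m \<ge> 1 \<Longrightarrow> (harm m :: real) \<le> 1 + ln (real m)"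
proof -
  assume "m \<ge> 1"
  then obtain k where m: "m = Suc k" by (cases m) auto
  have "harm (Suc k) - ln (real (Suc k)) \<le> (harm (Suc 0) - ln (real (Suc 0)) :: real)"
    using decseq_harm_diff_ln by (rule decseqD) simp
  then show ?thesis by (simp add: m harm_def)
qed

lemma sum_atLeast1_atMost_mult_split:
  fixes n Q :: nat
  shows "(\<Sum>t=1..n * Q. f t) = (\<Sum>k<Q. \<Sum>m=1..n. f (k * n + m) :: 'a::comm_monoid_add)"
proof (induction Q)
  case (Suc Q)
  have "(\<Sum>t=1..n * Suc Q. f t) = (\<Sum>t=1..n * Q + n. f t)"
    by (simp add: add.commute)
  also have "\<dots> = (\<Sum>t=1..n * Q. f t) + (\<Sum>t=n * Q + 1..n * Q + n. f t)"
    by (rule sum.ub_add_nat) simp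
  also have "(\<Sum>t=n * Q + 1..n * Q + n. f t) = (\<Sum>m=1..n. f (Q * n + m))"
    using sum.shift_bounds_cl_nat_ivl[of f 1 "n * Q" n] by (simp add: add.commute mult.commute)
  finally show ?case using Suc by simp
qed simp

lemma epoch_index_range:
  fixes n K t :: nat
  assumes epochs: "\<And>k. k \<in> {1..K} \<Longrightarrow> bij_betw (\<lambda>j. u ((k - 1) * n + j)) {1..n} {1..n}"
    and t: "t \<in> {1..n * K}"
  shows "u t \<in> {1..n}"
proof -
  have "n > 0" using t by (cases n) auto
  define k where "k = (t - 1) div n + 1"
  define j where "j = (t - 1) mod n + 1"
  have "t - 1 < K * n"
    using t by (auto simp: mult.commute)
  then have "(t - 1) div n < K"
    using \<open>n > 0\<close> by (simp add: div_less_iff_less_mult)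
  then have "k \<in> {1..K}"
    by (simp add: k_def)
  moreover have "j \<in> {1..n}"
    using \<open>n > 0\<close> by (simp add: j_def Suc_le_eq)
  moreover have "t = (k - 1) * n + j"
    using div_mult_mod_eq[of "t - 1" n] t unfolding k_def j_def by auto
  ultimately show ?thesis
    using bij_betwE[OF epochs] by auto
qed

lemma sum_first_epoch_visits:
  assumes "inj_on u {1..n}" "j \<in> {1..n}"
  shows "(\<Sum>m=1..n. if u m = u j then 1 / real m else 0) = 1 / real j"
proof -
  have "(\<Sum>m=1..n. if u m = u j then 1 / real m else 0) = (\<Sum>m=1..n. if m = j then 1 / real m else 0)"
    using assms by (intro sum.cong) (auto dest: inj_onD)
  also have "\<dots> = 1 / real j"
    using assms(2) by simp
  finally show ?thesis .
qed

lemma sum_later_epoch_visits_le: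
  assumes "inj_on (\<lambda>m. u (k * n + m)) {1..n}" "k \<ge> 1"
  shows "(\<Sum>m=1..n. if u (k * n + m) = v then 1 / real (k * n + m) else 0) \<le> 1 / real n * (1 / real k)"
proof -
  let ?V = "{m \<in> {1..n}. u (k * n + m) = v}"
  have "card ?V \<le> 1"
    using assms(1) by (auto simp: card_le_Suc0_iff_eq dest: inj_onD)
  have "(\<Sum>m=1..n. if u (k * n + m) = v then 1 / real (k * n + m) else 0) = (\<Sum>m\<in>?V. 1 / real (k * n + m))"
    by (simp add: sum.If_cases Int_def conj_commute)
  also have "\<dots> \<le> (\<Sum>m\<in>?V. 1 / real (k * n))"
    using assms(2) by (intro sum_mono frac_le) auto
  also have "\<dots> = card ?V * (1 / real (k * n))"
    by simp
  also have "\<dots> \<le> 1 * (1 / real (k * n))"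
    using \<open>card ?V \<le> 1\<close> by (intro mult_right_mono) auto
  finally show ?thesis by (simp add: mult.commute)
qed

lemma sum_visits_le:
  fixes u :: "nat \<Rightarrow> nat"
  assumes K: "K \<ge> 2"
    and epochs: "\<And>k. k \<in> {1..K} \<Longrightarrow> bij_betw (\<lambda>j. u ((k - 1) * n + j)) {1..n} {1..n}"
    and j: "j \<in> {1..n}"
  shows "(\<Sum>t=1..n * K. if u t = u j then 1 / real t else 0) \<le> 1 / real j + (ln (real K - 1) + 1) / real n"
proof -
  let ?f = "\<lambda>t. if u t = u j then 1 / real t else 0"
  have inj: "inj_on (\<lambda>m. u (k * n + m)) {1..n}" if "k < K" for k
    using epochs[of "Suc k"] that by (simp add: bij_betw_def)
  have "(\<Sum>t=1..n * K. ?f t) = (\<Sum>k<K. \<Sum>m=1..n. ?f (k * n + m))"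
    by (rule sum_atLeast1_atMost_mult_split)
  also have "\<dots> = (\<Sum>m=1..n. ?f m) + (\<Sum>k=1..<K. \<Sum>m=1..n. ?f (k * n + m))"
  proof -
    have "{..<K} = insert 0 {1..<K}" using K by auto
    then show ?thesis by (simp cong: if_cong)
  qed
  also have "\<dots> \<le> 1 / real j + (\<Sum>k=1..<K. 1 / real n * (1 / real k))"
  proof (rule add_mono)
    have "inj_on u {1..n}"
      using inj[of 0] K by simp
    then show "(\<Sum>m=1..n. ?f m) \<le> 1 / real j"
      using sum_first_epoch_visits j by (intro eq_refl)
    show "(\<Sum>k=1..<K. \<Sum>m=1..n. ?f (k * n + m)) \<le> (\<Sum>k=1..<K. 1 / real n * (1 / real k))"
      using inj by (intro sum_mono sum_later_epoch_visits_le) auto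
  qed
  also have "(\<Sum>k=1..<K. 1 / real n * (1 / real k)) = 1 / real n * harm (K - 1)"
    using K by (simp add: harm_def sum_distrib_left inverse_eq_divide atLeastLessThanSuc_atLeastAtMost[symmetric])
  also have "\<dots> \<le> 1 / real n * (1 + ln (real (K - 1)))"
    using K by (intro mult_left_mono harm_le_one_plus_ln) auto
  finally show ?thesis
    using K by (simp add: of_nat_diff add.commute)
qed

lemma sum_sqrt_visit_weights_le:
  fixes u :: "nat \<Rightarrow> nat" and c :: real
  assumes K: "K \<ge> 2" and "c > 0"
    and epochs: "\<And>k. k \<in> {1..K} \<Longrightarrow> bij_betw (\<lambda>j. u ((k - 1) * n + j)) {1..n} {1..n}"
  shows "(\<Sum>i=1..n. sqrt (\<Sum>t=1..n * K. if u t = i then (c / real t / sqrt (c / real t))\<^sup>2 else 0))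
       \<le> sqrt c * (\<Sum>i=1..n. sqrt (1 / real i + (ln (real K - 1) + 1) / real n))"
proof -
  have bij: "bij_betw u {1..n} {1..n}"
    using epochs[of 1] K by simp
  have weight: "(c / real t / sqrt (c / real t))\<^sup>2 = c / real t" for t
  proof -
    have sq: "(x / sqrt x)\<^sup>2 = x" if "x \<ge> 0" for x :: real
      using that by (cases "x = 0") (simp_all add: power_divide real_sqrt_pow2 power2_eq_square)
    show ?thesis by (rule sq) (use \<open>c > 0\<close> in simp)
  qed
  have "(\<Sum>i=1..n. sqrt (\<Sum>t=1..n * K. if u t = i then (c / real t / sqrt (c / real t))\<^sup>2 else 0))
      = (\<Sum>j=1..n. sqrt (\<Sum>t=1..n * K. if u t = u j then c / real t else 0))"
    unfolding weight by (rule sum.reindex_bij_betw[OF bij, symmetric])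
  also have "\<dots> = (\<Sum>j=1..n. sqrt (c * (\<Sum>t=1..n * K. if u t = u j then 1 / real t else 0)))"
    by (simp add: sum_distrib_left if_distrib cong: if_cong)
  also have "\<dots> \<le> (\<Sum>j=1..n. sqrt c * sqrt (1 / real j + (ln (real K - 1) + 1) / real n))"
    using sum_visits_le[OF K epochs] \<open>c > 0\<close>
    by (intro sum_mono) (auto simp: real_sqrt_mult intro: mult_left_mono)
  finally show ?thesis
    by (simp add: sum_distrib_left)
qed

theorem mainTheorem6:
  fixes \<mu> :: "'z measure" and loss :: "'a::euclidean_space \<Rightarrow> 'z \<Rightarrow> real"
    and grad :: "'a \<Rightarrow> 'z \<Rightarrow> 'a" and w0 :: 'a and PU :: "(nat \<Rightarrow> nat) pmf"
    and n K :: nat and c R L :: real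
  assumes "prob_space \<mu>"
    and "(\<lambda>(w, z). loss w z) \<in> borel_measurable (borel \<Otimes>\<^sub>M \<mu>)"
    and "\<And>w z. ((\<lambda>v. loss v z) has_derivative (\<lambda>h. grad w z \<bullet> h)) (at w)"
    and "R \<ge> 0"
    and "\<And>w. subgaussian \<mu> (loss w) R"
    and "\<And>w z. norm (grad w z) \<le> L"
    and "n \<ge> 1" and "K \<ge> 2" and "c > 0"
    and "\<And>u k. u \<in> set_pmf PU \<Longrightarrow> k \<in> {1..K} \<Longrightarrow>
           bij_betw (\<lambda>j. u ((k - 1) * n + j)) {1..n} {1..n}"
  shows "\<bar>sgld_gen \<mu> loss grad w0 (\<lambda>t. c / real t) (\<lambda>t. sqrt (c / real t)) PU n (n * K)\<bar>
         \<le> R * L * sqrt c / real n *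
           (\<Sum>i=1..n. sqrt (1 / real i + (ln (real K - 1) + 1) / real n))"
proof -
  let ?M = "PiM {1..n} (\<lambda>_. \<mu>) \<Otimes>\<^sub>M PiM {1..n * K} (\<lambda>_. std_gauss :: 'a measure)"
  define F where "F = (\<lambda>u (s, xi). let W = sgld_traj w0 (\<lambda>t. c / real t) (\<lambda>t. sqrt (c / real t)) grad s u xi (n * K)
    in pop_risk \<mu> loss W - emp_risk loss n s W)"
  define B where "B = R * L * sqrt c / real n * (\<Sum>i=1..n. sqrt (1 / real i + (ln (real K - 1) + 1) / real n))"
  have "L \<ge> 0"
    by (rule L_nonneg[OF assms(1-6)])
  have "B \<ge> 0"
    using assms(4,7,8,9) \<open>L \<ge> 0\<close> unfolding B_def by (intro mult_nonneg_nonneg sum_nonneg) auto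
  have "integrable ?M (F u) \<and> \<bar>\<integral>p. F u p \<partial>?M\<bar> \<le> B" if u: "u \<in> set_pmf PU" for u
  proof -
    have sg_nonzero: "sqrt (c / real t) \<noteq> 0" if "t \<in> {1..n * K}" for t
      using that assms(9) by auto
    have index_range: "u t \<in> {1..n}" if "t \<in> {1..n * K}" for t
      using epoch_index_range[OF assms(10)[OF u] that] .
    note gap = abs_integral_sgld_gen_gap_le[where T = "n * K" and sg = "\<lambda>t. sqrt (c / real t)" and u = u
        and eta = "\<lambda>t. c / real t" and ?w0.0 = w0, OF assms(1-6) sg_nonzero index_range assms(7)]
    have "R * L / real n * (\<Sum>i=1..n. sqrt (\<Sum>t=1..n * K. if u t = i then (c / real t / sqrt (c / real t))\<^sup>2 else 0))
        \<le> B"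
      using mult_left_mono[OF sum_sqrt_visit_weights_le[OF assms(8,9) assms(10)[OF u]], of "R * L / real n"]
        assms(4) \<open>L \<ge> 0\<close> unfolding B_def by (simp add: mult_ac)
    then show ?thesis
      using gap unfolding F_def by auto
  qed
  moreover have "sgld_gen \<mu> loss grad w0 (\<lambda>t. c / real t) (\<lambda>t. sqrt (c / real t)) PU n (n * K)
      = (\<integral>(s, u, xi). F u (s, xi) \<partial>(PiM {1..n} (\<lambda>_. \<mu>) \<Otimes>\<^sub>M (measure_pmf PU \<Otimes>\<^sub>M PiM {1..n * K} (\<lambda>_. std_gauss))))"
    unfolding sgld_gen_def F_def by simp
  ultimately show ?thesis
    using \<open>B \<ge> 0\<close> prob_space_PiM[of "{1..n}" "\<lambda>_. \<mu>"] assms(1) prob_space_PiM_std_gauss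
    unfolding B_def[symmetric] by (auto intro!: abs_integral_mixture_le)
qed

end
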